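(* If a nested sequent $\Gamma$ is derivable in $\mathsf{N.IntCK}\cup\{\mathsf{cut}\}$, then $\Gamma$ is derivable in $\mathsf{N.IntCK}$.
   Context: Language $\mathcal{L}$: formulas $\varphi ::= p \mid \bot \mid \varphi\wedge\varphi \mid \varphi\vee\varphi \mid \varphi\to\varphi \mid \varphi \mathrel{\Box\!\!\to} \varphi \mid \varphi \mathrel{\Diamond\!\!\to}\varphi$. Nested sequents: each formula $\varphi$ gets an input polarity $\varphi^\bullet$ or output polarity $\varphi^\circ$. Input sequents $\Lambda ::= \emptyset \mid \Lambda,\varphi^\bullet \mid \Lambda,[\psi:\Lambda]$ and nested sequents $\Gamma ::= \Lambda,\varphi^\circ \mid \Lambda,[\psi:\Gamma]$, where the index $\psi$ of a component $[\psi:\cdot]$ is an unpolarised formula; a nested sequent contains exactly one output formula (commas are associative and commutative). A context $\Gamma\{\ \}$ is a sequent with one hole $\{\ \}$ (possibly inside nested components), to be filled with a sequent; rules are applied only when premisses and conclusion are nested sequents. $\Gamma^{\downarrow}\{\ \}$ denotes $\Gamma\{\ \}$ with its output formula removed. Rules of $\mathsf{N.IntCK}$ (premisses / conclusion): init: $\Gamma\{p^\bullet,p^\circ\}$ ($p$ atom, no premiss); $\bot^\bullet$: $\Gamma\{\bot^\bullet\}$ (no premiss); $\wedge^\bullet$: $\Gamma\{\varphi^\bullet,\psi^\bullet\}$ / $\Gamma\{(\varphi\wedge\psi)^\bullet\}$; $\wedge^\circ$: $\Gamma\{\varphi^\circ\}$, $\Gamma\{\psi^\circ\}$ / $\Gamma\{(\varphi\wedge\psi)^\circ\}$;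 $\vee^\bullet$: $\Gamma\{\varphi^\bullet\}$, $\Gamma\{\psi^\bullet\}$ / $\Gamma\{(\varphi\vee\psi)^\bullet\}$; $\vee^\circ$: $\Gamma\{\varphi^\circ\}$ / $\Gamma\{(\varphi\vee\psi)^\circ\}$ and $\Gamma\{\psi^\circ\}$ / $\Gamma\{(\varphi\vee\psi)^\circ\}$; $\to^\bullet$: $\Gamma^\downarrow\{(\varphi\to\psi)^\bullet,\varphi^\circ\}$, $\Gamma\{\psi^\bullet\}$ / $\Gamma\{(\varphi\to\psi)^\bullet\}$; $\to^\circ$: $\Gamma\{\varphi^\bullet,\psi^\circ\}$ / $\Gamma\{(\varphi\to\psi)^\circ\}$; $\Box^\bullet$: $\varphi^\bullet,\eta^\circ$ and $\eta^\bullet,\varphi^\circ$ and $\Gamma\{(\varphi\mathrel{\Box\!\!\to}\psi)^\bullet,[\eta:\psi^\bullet,\Delta]\}$ / $\Gamma\{(\varphi\mathrel{\Box\!\!\to}\psi)^\bullet,[\eta:\Delta]\}$; $\Box^\circ$: $\Gamma\{[\varphi:\psi^\circ]\}$ / $\Gamma\{(\varphi\mathrel{\Box\!\!\to}\psi)^\circ\}$; $\Diamond^\bullet$: $\Gamma\{[\varphi:\psi^\bullet]\}$ / $\Gamma\{(\varphi\mathrel{\Diamond\!\!\to}\psi)^\bullet\}$; $\Diamond^\circ$: $\varphi^\bullet,\eta^\circ$ and $\eta^\bullet,\varphi^\circ$ and $\Gamma\{[\eta:\psi^\circ,\Delta]\}$ / $\Gamma\{(\varphi\mathrel{\Diamond\!\!\to}\psi)^\circ,[\eta:\Delta]\}$.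 A derivation is a finite tree of rule instances whose leaves are instances of init or $\bot^\bullet$. The cut rule $\mathsf{cut}$: from premisses $\Gamma^{\downarrow}\{\xi^\circ\}$ and $\Gamma\{\xi^\bullet\}$ infer $\Gamma\{\emptyset\}$ (the hole filled with the empty sequent), for any formula $\xi$ and context $\Gamma\{\ \}$ for which these are nested sequents. *)

theory Defs
  imports Main "HOL-Library.Multiset"
begin

datatype 'a fm =
    Atom 'a
  | Bot
  | Conj "'a fm" "'a fm"
  | Disj "'a fm" "'a fm"
  | Imp "'a fm" "'a fm"
  | BoxArr "'a fm" "'a fm"
  | DiaArr "'a fm" "'a fm"

text \<open>A (possibly ill-formed) sequent is a multiset of items; commas are thereby
associative and commutative.  An item is an input formula, an output formula,
or a component [psi : S] with unpolarised index psi.\<close>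

datatype 'a item =
    In "'a fm"
  | Out "'a fm"
  | Comp "'a fm" "'a item multiset"

type_synonym 'a seq = "'a item multiset"

primrec outs_item :: "'a item \<Rightarrow> nat" where
  "outs_item (In \<phi>) = 0"
| "outs_item (Out \<phi>) = 1"
| "outs_item (Comp \<psi> S) = sum_mset (image_mset outs_item S)"

definition outs :: "'a seq \<Rightarrow> nat" where
  "outs S = sum_mset (image_mset outs_item S)"

text \<open>By the grammar, a nested sequent is exactly a sequent containing exactly one
output formula (input sequents are those with none).\<close>
definition is_nested :: "'a seq \<Rightarrow> bool" where
  "is_nested S \<longleftrightarrow> outs S = 1"

fun is_out :: "'a item \<Rightarrow> bool" where
  "is_out (Out \<phi>) = True"
| "is_out _ = False"

primrec strip_item :: "'a item \<Rightarrow> 'a item" where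
  "strip_item (In \<phi>) = In \<phi>"
| "strip_item (Out \<phi>) = Out \<phi>"
| "strip_item (Comp \<psi> S) = Comp \<psi> (filter_mset (\<lambda>x. \<not> is_out x) (image_mset strip_item S))"

definition strip :: "'a seq \<Rightarrow> 'a seq" where
  "strip S = filter_mset (\<lambda>x. \<not> is_out x) (image_mset strip_item S)"

text \<open>A context is a sequent with exactly one hole, possibly inside nested
components: either  Delta, {}  or  Delta, [psi : C].\<close>
datatype 'a ctx =
    Top "'a seq"
  | Nest "'a seq" "'a fm" "'a ctx"

primrec fill :: "'a ctx \<Rightarrow> 'a seq \<Rightarrow> 'a seq" where
  "fill (Top \<Delta>) X = \<Delta> + X"
| "fill (Nest \<Delta> \<psi> C) X = \<Delta> + {# Comp \<psi> (fill C X) #}"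

primrec down :: "'a ctx \<Rightarrow> 'a ctx" where
  "down (Top \<Delta>) = Top (strip \<Delta>)"
| "down (Nest \<Delta> \<psi> C) = Nest (strip \<Delta>) \<psi> (down C)"

text \<open>derivable c S: S is derivable in N.IntCK, plus the cut rule if c = True.
Every rule instance requires premisses and conclusion to be nested sequents.\<close>

inductive derivable :: "bool \<Rightarrow> 'a seq \<Rightarrow> bool" for c :: bool where
  init:
    "is_nested (fill G {# In (Atom p), Out (Atom p) #})
     \<Longrightarrow> derivable c (fill G {# In (Atom p), Out (Atom p) #})"
| botL:
    "is_nested (fill G {# In Bot #}) \<Longrightarrow> derivable c (fill G {# In Bot #})"
| conjL:
    "\<lbrakk> derivable c (fill G {# In \<phi>, In \<psi> #});
       is_nested (fill G {# In \<phi>, In \<psi> #});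
       is_nested (fill G {# In (Conj \<phi> \<psi>) #}) \<rbrakk>
     \<Longrightarrow> derivable c (fill G {# In (Conj \<phi> \<psi>) #})"
| conjR:
    "\<lbrakk> derivable c (fill G {# Out \<phi> #}); derivable c (fill G {# Out \<psi> #});
       is_nested (fill G {# Out \<phi> #}); is_nested (fill G {# Out \<psi> #});
       is_nested (fill G {# Out (Conj \<phi> \<psi>) #}) \<rbrakk>
     \<Longrightarrow> derivable c (fill G {# Out (Conj \<phi> \<psi>) #})"
| disjL:
    "\<lbrakk> derivable c (fill G {# In \<phi> #}); derivable c (fill G {# In \<psi> #});
       is_nested (fill G {# In \<phi> #}); is_nested (fill G {# In \<psi> #});
       is_nested (fill G {# In (Disj \<phi> \<psi>) #}) \<rbrakk>
     \<Longrightarrow> derivable c (fill G {# In (Disj \<phi> \<psi>) #})"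
| disjR1:
    "\<lbrakk> derivable c (fill G {# Out \<phi> #});
       is_nested (fill G {# Out \<phi> #});
       is_nested (fill G {# Out (Disj \<phi> \<psi>) #}) \<rbrakk>
     \<Longrightarrow> derivable c (fill G {# Out (Disj \<phi> \<psi>) #})"
| disjR2:
    "\<lbrakk> derivable c (fill G {# Out \<psi> #});
       is_nested (fill G {# Out \<psi> #});
       is_nested (fill G {# Out (Disj \<phi> \<psi>) #}) \<rbrakk>
     \<Longrightarrow> derivable c (fill G {# Out (Disj \<phi> \<psi>) #})"
| impL:
    "\<lbrakk> derivable c (fill (down G) {# In (Imp \<phi> \<psi>), Out \<phi> #});
       derivable c (fill G {# In \<psi> #});
       is_nested (fill (down G) {# In (Imp \<phi> \<psi>), Out \<phi> #});
       is_nested (fill G {# In \<psi> #});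
       is_nested (fill G {# In (Imp \<phi> \<psi>) #}) \<rbrakk>
     \<Longrightarrow> derivable c (fill G {# In (Imp \<phi> \<psi>) #})"
| impR:
    "\<lbrakk> derivable c (fill G {# In \<phi>, Out \<psi> #});
       is_nested (fill G {# In \<phi>, Out \<psi> #});
       is_nested (fill G {# Out (Imp \<phi> \<psi>) #}) \<rbrakk>
     \<Longrightarrow> derivable c (fill G {# Out (Imp \<phi> \<psi>) #})"
| boxL:
    "\<lbrakk> derivable c {# In \<phi>, Out \<eta> #}; derivable c {# In \<eta>, Out \<phi> #};
       derivable c (fill G {# In (BoxArr \<phi> \<psi>), Comp \<eta> ({# In \<psi> #} + \<Delta>) #});
       is_nested (fill G {# In (BoxArr \<phi> \<psi>), Comp \<eta> ({# In \<psi> #} + \<Delta>) #});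
       is_nested (fill G {# In (BoxArr \<phi> \<psi>), Comp \<eta> \<Delta> #}) \<rbrakk>
     \<Longrightarrow> derivable c (fill G {# In (BoxArr \<phi> \<psi>), Comp \<eta> \<Delta> #})"
| boxR:
    "\<lbrakk> derivable c (fill G {# Comp \<phi> {# Out \<psi> #} #});
       is_nested (fill G {# Comp \<phi> {# Out \<psi> #} #});
       is_nested (fill G {# Out (BoxArr \<phi> \<psi>) #}) \<rbrakk>
     \<Longrightarrow> derivable c (fill G {# Out (BoxArr \<phi> \<psi>) #})"
| diaL:
    "\<lbrakk> derivable c (fill G {# Comp \<phi> {# In \<psi> #} #});
       is_nested (fill G {# Comp \<phi> {# In \<psi> #} #});
       is_nested (fill G {# In (DiaArr \<phi> \<psi>) #}) \<rbrakk>
     \<Longrightarrow> derivable c (fill G {# In (DiaArr \<phi> \<psi>) #})"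
| diaR:
    "\<lbrakk> derivable c {# In \<phi>, Out \<eta> #}; derivable c {# In \<eta>, Out \<phi> #};
       derivable c (fill G {# Comp \<eta> ({# Out \<psi> #} + \<Delta>) #});
       is_nested (fill G {# Comp \<eta> ({# Out \<psi> #} + \<Delta>) #});
       is_nested (fill G {# Out (DiaArr \<phi> \<psi>), Comp \<eta> \<Delta> #}) \<rbrakk>
     \<Longrightarrow> derivable c (fill G {# Out (DiaArr \<phi> \<psi>), Comp \<eta> \<Delta> #})"
| cut:
    "\<lbrakk> c; derivable c (fill (down G) {# Out \<xi> #}); derivable c (fill G {# In \<xi> #});
       is_nested (fill (down G) {# Out \<xi> #}); is_nested (fill G {# In \<xi> #});
       is_nested (fill G {#}) \<rbrakk>
     \<Longrightarrow> derivable c (fill G {#})"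

end

theory Submission
  imports Defs
begin

text \<open>Cut is eliminated by induction on the cut formula. The engine is one admissibility result:
  cut-free derivability is preserved under structural simulation, which rewrites pieces of a
  sequent by weakening with input formulas, inversion of the invertible rules, contraction of
  atomic inputs, and merging of two components \<open>[\<phi> : A], [\<eta> : B]\<close> into \<open>[\<eta> : A, B]\<close> for
  interderivable \<open>\<phi>\<close> and \<open>\<eta>\<close>; merging needs a cut on \<open>\<phi>\<close>, supplied by the outer induction.
  For implications and box-arrows, whose right rules are invertible, the cut is permuted upwards
  through the derivation of the right premiss \<open>\<Gamma>{\<xi>\<^sup>\<bullet>}\<close> and, once \<open>\<xi>\<close> is principal there, replaced
  by cuts on its immediate subformulas after inverting the left premiss. For atoms, \<open>\<bottom>\<close>,
  disjunctions and diamond-arrows the left rules are invertible and the cut is permuted through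
  the left premiss \<open>\<Gamma>\<^sup>\<down>{\<xi>\<^sup>\<circ>}\<close> instead; a diamond-arrow principal on the left is reduced by
  merging its component with the one of the right premiss. Conjunctions are invertible on both
  sides and reduce directly.\<close>

section \<open>Sequents and contexts\<close>

lemma strip_item_Comp [simp]: "strip_item (Comp \<psi> S) = Comp \<psi> (strip S)"
  by (simp add: strip_def)

lemma outs_item_Comp [simp]: "outs_item (Comp \<psi> S) = outs S"
  by (simp add: outs_def)

declare strip_item.simps(3) [simp del] outs_item.simps(3) [simp del]

lemma is_out_strip_item [simp]: "is_out (strip_item x) = is_out x"
  by (cases x) auto

lemma strip_empty [simp]: "strip {#} = {#}"
  and strip_union [simp]: "strip (A + B) = strip A + strip B"
  and strip_add_mset [simp]:
    "strip (add_mset x A) = (if is_out x then strip A else add_mset (strip_item x) (strip A))"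
  by (simp_all add: strip_def)

lemma outs_empty [simp]: "outs {#} = 0"
  and outs_union [simp]: "outs (A + B) = outs A + outs B"
  and outs_add_mset [simp]: "outs (add_mset x A) = outs_item x + outs A"
  by (simp_all add: outs_def)

lemma strip_item_idem [simp]: "strip_item (strip_item x) = strip_item x"
proof (induction x)
  case (Comp \<psi> S)
  then have "strip (strip S) = strip S"
    by (induction S) auto
  then show ?case by simp
qed auto

lemma strip_idem [simp]: "strip (strip S) = strip S"
  by (induction S) auto

lemma outs_item_strip_item: "\<not> is_out x \<Longrightarrow> outs_item (strip_item x) = 0"
proof (induction x)
  case (Comp \<psi> S)
  then have "outs (strip S) = 0"
    by (induction S) auto
  then show ?case by simp
qed auto

lemma outs_strip [simp]: "outs (strip S) = 0"
  by (induction S) (auto simp: outs_item_strip_item)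

definition top_out_free :: "'a seq \<Rightarrow> bool" where
  "top_out_free M \<longleftrightarrow> (\<forall>x\<in>#M. \<not> is_out x)"

lemma strip_item_eq_In_iff [simp]: "strip_item x = In \<phi> \<longleftrightarrow> x = In \<phi>"
  by (cases x) auto

lemma strip_item_eq_Comp_iff:
  "strip_item x = Comp \<eta> \<Delta> \<longleftrightarrow> (\<exists>\<Delta>'. x = Comp \<eta> \<Delta>' \<and> strip \<Delta>' = \<Delta>)"
  by (cases x) auto

lemma mem_strip_iff: "y \<in># strip M \<longleftrightarrow> (\<exists>x\<in>#M. \<not> is_out x \<and> strip_item x = y)"
  by (auto simp: strip_def)

lemma strip_mem_In: "In \<phi> \<in># strip M \<Longrightarrow> In \<phi> \<in># M"
  by (auto simp: mem_strip_iff)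

lemma strip_mem_Comp: "Comp \<eta> \<Delta> \<in># strip M \<Longrightarrow> \<exists>\<Delta>'. Comp \<eta> \<Delta>' \<in># M \<and> strip \<Delta>' = \<Delta>"
  by (auto simp: mem_strip_iff strip_item_eq_Comp_iff)

lemma strip_eq_union:
  "strip M = A + B \<Longrightarrow> \<exists>M1 M2. M = M1 + M2 \<and> strip M1 = A \<and> strip M2 = B \<and> top_out_free M2"
proof (induction M arbitrary: A B)
  case (add x M)
  show ?case
  proof (cases "is_out x")
    case True
    with add.prems have "strip M = A + B" by simp
    then obtain M1 M2 where "M = M1 + M2" "strip M1 = A" "strip M2 = B" "top_out_free M2"
      using add.IH by blast
    with True show ?thesis by (intro exI[of _ "add_mset x M1"] exI[of _ M2]) simp
  next
    case False
    with add.prems have x: "add_mset (strip_item x) (strip M) = A + B" by simp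
    then consider A' where "A = add_mset (strip_item x) A'"
      | B' where "B = add_mset (strip_item x) B'"
      by (metis multi_member_split union_iff union_single_eq_member)
    then show ?thesis
    proof cases
      case 1
      with x add.IH[of A' B] obtain M1 M2 where
        "M = M1 + M2" "strip M1 = A'" "strip M2 = B" "top_out_free M2"
        by auto
      with 1 False show ?thesis by (intro exI[of _ "add_mset x M1"] exI[of _ M2]) simp
    next
      case 2
      with x add.IH[of A B'] obtain M1 M2 where
        "M = M1 + M2" "strip M1 = A" "strip M2 = B'" "top_out_free M2"
        by auto
      with 2 False show ?thesis
        by (intro exI[of _ M1] exI[of _ "add_mset x M2"]) (simp add: top_out_free_def)
    qed
  qed
qed (simp add: top_out_free_def)

lemma strip_eq_add_mset:
  "strip M = add_mset y Y \<Longrightarrow> \<exists>x M'. M = add_mset x M' \<and> strip_item x = y \<and> strip M' = Y"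
proof (induction M arbitrary: Y)
  case (add x M)
  show ?case
  proof (cases "is_out x \<or> strip_item x \<noteq> y")
    case True
    with add.prems obtain Y' where "strip M = add_mset y Y'"
      "Y = (if is_out x then Y' else add_mset (strip_item x) Y')"
      by (cases "is_out x") (auto simp: add_eq_conv_ex)
    with add.IH obtain x' M' where "M = add_mset x' M'" "strip_item x' = y" "strip M' = Y'"
      by blast
    with True \<open>Y = _\<close> show ?thesis
      by (intro exI[of _ x'] exI[of _ "add_mset x M'"]) (auto simp: add_mset_commute)
  qed (use add.prems in auto)
qed simp

lemma top_out_free_strip_empty: "top_out_free M \<Longrightarrow> strip M = {#} \<Longrightarrow> M = {#}"
  by (induction M) (auto simp: top_out_free_def split: if_splits)

lemma top_out_free_strip_In:
  assumes "top_out_free X" "strip X = {#In \<phi>#}"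
  shows "X = {#In \<phi>#}"
proof -
  obtain x M where X: "X = add_mset x M" "x = In \<phi>" "strip M = {#}"
    using strip_eq_add_mset[of X "In \<phi>" "{#}"] assms(2) by auto
  moreover have "top_out_free M"
    using assms(1) X(1) by (simp add: top_out_free_def)
  ultimately show ?thesis using top_out_free_strip_empty by blast
qed

lemma top_out_free_strip_In_Comp:
  assumes "top_out_free X" "strip X = {#In \<phi>, Comp \<eta> \<Delta>#}"
  obtains \<Delta>' where "X = {#In \<phi>, Comp \<eta> \<Delta>'#}" "strip \<Delta>' = \<Delta>"
proof -
  obtain x M where X: "X = add_mset x M" "x = In \<phi>" "strip M = {#Comp \<eta> \<Delta>#}"
    using strip_eq_add_mset[of X "In \<phi>" "{#Comp \<eta> \<Delta>#}"] assms(2) by auto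
  moreover obtain \<Delta>' M' where M: "M = add_mset (Comp \<eta> \<Delta>') M'" "strip \<Delta>' = \<Delta>" "strip M' = {#}"
    using strip_eq_add_mset[OF X(3)] by (auto simp: strip_item_eq_Comp_iff)
  moreover have "top_out_free M'"
    using assms(1) X(1) M(1) by (simp add: top_out_free_def)
  ultimately have "X = {#In \<phi>, Comp \<eta> \<Delta>'#}"
    using top_out_free_strip_empty by (simp add: add_mset_commute)
  then show ?thesis using M(2) by (rule that)
qed

primrec add_outer :: "'a ctx \<Rightarrow> 'a seq \<Rightarrow> 'a ctx" where
  "add_outer (Top \<Delta>) M = Top (\<Delta> + M)"
| "add_outer (Nest \<Delta> \<psi> C) M = Nest (\<Delta> + M) \<psi> C"

primrec add_at_hole :: "'a ctx \<Rightarrow> 'a seq \<Rightarrow> 'a ctx" where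
  "add_at_hole (Top \<Delta>) M = Top (\<Delta> + M)"
| "add_at_hole (Nest \<Delta> \<psi> C) M = Nest \<Delta> \<psi> (add_at_hole C M)"

primrec ctx_comp :: "'a ctx \<Rightarrow> 'a ctx \<Rightarrow> 'a ctx" where
  "ctx_comp (Top \<Delta>) K = add_outer K \<Delta>"
| "ctx_comp (Nest \<Delta> \<psi> C) K = Nest \<Delta> \<psi> (ctx_comp C K)"

primrec hole_level :: "'a ctx \<Rightarrow> 'a seq" where
  "hole_level (Top \<Delta>) = \<Delta>"
| "hole_level (Nest \<Delta> \<psi> C) = hole_level C"

primrec ctx_outs :: "'a ctx \<Rightarrow> nat" where
  "ctx_outs (Top \<Delta>) = outs \<Delta>"
| "ctx_outs (Nest \<Delta> \<psi> C) = outs \<Delta> + ctx_outs C"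

lemma fill_add_outer [simp]: "fill (add_outer K M) X = fill K X + M"
  by (cases K) (auto simp: ac_simps)

lemma fill_add_at_hole [simp]: "fill (add_at_hole K M) X = fill K (M + X)"
  by (induction K) (auto simp: ac_simps)

lemma fill_ctx_comp [simp]: "fill (ctx_comp C K) X = fill C (fill K X)"
  by (induction C) (auto simp: ac_simps)

lemma add_at_hole_empty [simp]: "add_at_hole K {#} = K"
  by (induction K) auto

lemma add_at_hole_add_at_hole [simp]: "add_at_hole (add_at_hole K A) B = add_at_hole K (A + B)"
  by (induction K) (auto simp: ac_simps)

lemma outs_fill [simp]: "outs (fill K X) = ctx_outs K + outs X"
  by (induction K) auto

lemma ctx_outs_add_outer [simp]: "ctx_outs (add_outer K M) = ctx_outs K + outs M"
  by (cases K) auto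

lemma ctx_outs_add_at_hole [simp]: "ctx_outs (add_at_hole K M) = ctx_outs K + outs M"
  by (induction K) auto

lemma ctx_outs_ctx_comp [simp]: "ctx_outs (ctx_comp C K) = ctx_outs C + ctx_outs K"
  by (induction C) auto

lemma strip_fill: "strip (fill K X) = fill (down K) (strip X)"
  by (induction K) auto

lemma down_add_outer [simp]: "down (add_outer K M) = add_outer (down K) (strip M)"
  by (cases K) auto

lemma down_add_at_hole [simp]: "down (add_at_hole K M) = add_at_hole (down K) (strip M)"
  by (induction K) auto

lemma down_ctx_comp [simp]: "down (ctx_comp C K) = ctx_comp (down C) (down K)"
  by (induction C) auto

lemma down_idem [simp]: "down (down K) = down K"
  by (induction K) auto

lemma ctx_outs_down [simp]: "ctx_outs (down K) = 0"
  by (induction K) auto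

lemma hole_level_down [simp]: "hole_level (down K) = strip (hole_level K)"
  by (induction K) auto

lemma hole_level_add_at_hole [simp]: "hole_level (add_at_hole K M) = hole_level K + M"
  by (induction K) auto

lemma ctx_comp_Nest: "ctx_comp K (Nest \<Delta> \<eta> C) = ctx_comp (add_at_hole K \<Delta>) (Nest {#} \<eta> C)"
  by (induction K) (auto simp: ac_simps)

lemma hole_level_mem: "x \<in># hole_level G \<Longrightarrow> \<exists>G0. G = add_at_hole G0 {#x#}"
proof (induction G)
  case (Top \<Delta>)
  then show ?case
    by (metis add_at_hole.simps(1) hole_level.simps(1) multi_member_split add_mset_add_single)
next
  case (Nest \<Delta> \<psi> C)
  then show ?case by (metis add_at_hole.simps(2) hole_level.simps(2))
qed

lemma add_at_hole_cancel:
  "add_at_hole K1 (add_mset x M) = add_at_hole K2 (add_mset x N) \<Longrightarrow>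
   add_at_hole K1 M = add_at_hole K2 N"
proof (induction K1 arbitrary: K2)
  case (Top \<Delta>)
  then show ?case by (cases K2) auto
next
  case (Nest \<Delta> \<psi> C)
  then show ?case by (cases K2) auto
qed

text \<open>A context with two holes: either the holes lie in two disjoint contexts placed side by
  side, or both lie inside a common component. \<open>plug_left C X\<close> fills the first hole with \<open>X\<close>
  and leaves a context for the second one; \<open>plug_right\<close> is symmetric.\<close>

datatype 'a ctx2 = Par "'a ctx" "'a ctx" | Nest2 "'a seq" "'a fm" "'a ctx2"

primrec fill2 :: "'a ctx2 \<Rightarrow> 'a seq \<Rightarrow> 'a seq \<Rightarrow> 'a seq" where
  "fill2 (Par K1 K2) X Y = fill K1 X + fill K2 Y"
| "fill2 (Nest2 \<Delta> \<psi> C) X Y = \<Delta> + {# Comp \<psi> (fill2 C X Y) #}"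

primrec plug_right :: "'a ctx2 \<Rightarrow> 'a seq \<Rightarrow> 'a ctx" where
  "plug_right (Par K1 K2) Y = add_outer K1 (fill K2 Y)"
| "plug_right (Nest2 \<Delta> \<psi> C) Y = Nest \<Delta> \<psi> (plug_right C Y)"

primrec plug_left :: "'a ctx2 \<Rightarrow> 'a seq \<Rightarrow> 'a ctx" where
  "plug_left (Par K1 K2) X = add_outer K2 (fill K1 X)"
| "plug_left (Nest2 \<Delta> \<psi> C) X = Nest \<Delta> \<psi> (plug_left C X)"

primrec down2 :: "'a ctx2 \<Rightarrow> 'a ctx2" where
  "down2 (Par K1 K2) = Par (down K1) (down K2)"
| "down2 (Nest2 \<Delta> \<psi> C) = Nest2 (strip \<Delta>) \<psi> (down2 C)"

primrec ctx2_outs :: "'a ctx2 \<Rightarrow> nat" where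
  "ctx2_outs (Par K1 K2) = ctx_outs K1 + ctx_outs K2"
| "ctx2_outs (Nest2 \<Delta> \<psi> C) = outs \<Delta> + ctx2_outs C"

lemma fill_plug_right [simp]: "fill (plug_right C Y) X = fill2 C X Y"
  by (induction C) (auto simp: ac_simps)

lemma fill_plug_left [simp]: "fill (plug_left C X) Y = fill2 C X Y"
  by (induction C) (auto simp: ac_simps)

lemma down_plug_right [simp]: "down (plug_right C Y) = plug_right (down2 C) (strip Y)"
  by (induction C) (auto simp: strip_fill)

lemma down_plug_left [simp]: "down (plug_left C X) = plug_left (down2 C) (strip X)"
  by (induction C) (auto simp: strip_fill)

lemma down2_idem [simp]: "down2 (down2 C) = down2 C"
  by (induction C) auto

lemma outs_fill2 [simp]: "outs (fill2 C X Y) = ctx2_outs C + outs X + outs Y"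
  by (induction C) auto

lemma ctx2_outs_down2 [simp]: "ctx2_outs (down2 C) = 0"
  by (induction C) auto

lemma ctx_outs_plug_left [simp]: "ctx_outs (plug_left C X) = ctx2_outs C + outs X"
  by (induction C) auto

lemma fill_plug_left_empty: "fill (plug_left C X) {#} = fill (plug_right C {#}) X"
  by simp

lemma is_nested_fill [simp]: "is_nested (fill G X) \<longleftrightarrow> ctx_outs G + outs X = 1"
  and is_nested_fill2 [simp]: "is_nested (fill2 C X Y) \<longleftrightarrow> ctx2_outs C + outs X + outs Y = 1"
  by (simp_all add: is_nested_def)

lemma derivable_is_nested: "derivable c S \<Longrightarrow> is_nested S"
  by (induction rule: derivable.induct) auto

section \<open>Locating a formula in a filled context\<close>

lemma union_eq_add_mset_cases:
  assumes "A + X = add_mset c B"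
  obtains X0 where "X = add_mset c X0" "B = A + X0" | A0 where "A = add_mset c A0" "B = A0 + X"
proof (cases "c \<in># X")
  case True
  then obtain X0 where "X = add_mset c X0" by (metis multi_member_split)
  with assms that(1) show ?thesis by simp
next
  case False
  with assms have "c \<in># A" by (metis union_iff union_single_eq_member)
  then obtain A0 where "A = add_mset c A0" by (metis multi_member_split)
  with assms that(2) show ?thesis by simp
qed

text \<open>Two decompositions of one sequent into a context and hole contents: the holes lie in
  disjoint places, at the same place, or one inside a component filling the other.\<close>

lemma fill_eq_fill_cases:
  "fill H X = fill G Y \<Longrightarrow>
   (\<exists>C. H = plug_right C Y \<and> G = plug_left C X) \<or>
   (\<exists>K A B. H = add_at_hole K A \<and> G = add_at_hole K B \<and> A + X = B + Y) \<or>
   (\<exists>\<eta> C X0. X = add_mset (Comp \<eta> (fill C Y)) X0 \<and>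
      G = ctx_comp (add_at_hole H X0) (Nest {#} \<eta> C)) \<or>
   (\<exists>\<eta> C Y0. Y = add_mset (Comp \<eta> (fill C X)) Y0 \<and>
      H = ctx_comp (add_at_hole G Y0) (Nest {#} \<eta> C))"
proof (induction H arbitrary: G)
  case (Top A)
  show ?case
  proof (cases G)
    case (Top B)
    with Top.prems show ?thesis by (intro disjI2 disjI1 exI[of _ "Top {#}"]) auto
  next
    case (Nest B \<eta> C)
    with Top.prems have "A + X = add_mset (Comp \<eta> (fill C Y)) B" by simp
    then show ?thesis
    proof (cases rule: union_eq_add_mset_cases)
      case (1 X0)
      with Nest show ?thesis
        by (intro disjI2 disjI2 disjI1 exI[of _ \<eta>] exI[of _ C] exI[of _ X0]) auto
    next
      case (2 A0)
      with Nest show ?thesis by (intro disjI1 exI[of _ "Par (Top A0) (Nest {#} \<eta> C)"]) auto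
    qed
  qed
next
  case (Nest A \<eta> C)
  show ?case
  proof (cases G)
    case (Top B)
    with Nest.prems have "B + Y = add_mset (Comp \<eta> (fill C X)) A" by simp
    then show ?thesis
    proof (cases rule: union_eq_add_mset_cases)
      case (1 Y0)
      with Top show ?thesis
        by (intro disjI2 disjI2 disjI2 exI[of _ \<eta>] exI[of _ C] exI[of _ Y0]) auto
    next
      case (2 B0)
      with Top show ?thesis by (intro disjI1 exI[of _ "Par (Nest {#} \<eta> C) (Top B0)"]) auto
    qed
  next
    case (Nest B \<eta>' C')
    with Nest.prems have eq: "add_mset (Comp \<eta> (fill C X)) A = add_mset (Comp \<eta>' (fill C' Y)) B"
      by simp
    show ?thesis
    proof (cases "Comp \<eta> (fill C X) = Comp \<eta>' (fill C' Y)")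
      case True
      with eq have same: "\<eta> = \<eta>'" "A = B" "fill C X = fill C' Y" by auto
      from Nest.IH[OF same(3)] show ?thesis
      proof (elim disjE exE conjE)
        fix C2
        assume "C = plug_right C2 Y" "C' = plug_left C2 X"
        with Nest same show ?thesis by (intro disjI1 exI[of _ "Nest2 A \<eta> C2"]) auto
      next
        fix K A' B'
        assume "C = add_at_hole K A'" "C' = add_at_hole K B'" "A' + X = B' + Y"
        with Nest same show ?thesis by (intro disjI2 disjI1 exI[of _ "Nest A \<eta> K"]) auto
      next
        fix \<theta> C0 X0
        assume "X = add_mset (Comp \<theta> (fill C0 Y)) X0"
          "C' = ctx_comp (add_at_hole C X0) (Nest {#} \<theta> C0)"
        with Nest same show ?thesis
          by (intro disjI2 disjI2 disjI1 exI[of _ \<theta>] exI[of _ C0] exI[of _ X0]) auto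
      next
        fix \<theta> C0 Y0
        assume "Y = add_mset (Comp \<theta> (fill C0 X)) Y0"
          "C = ctx_comp (add_at_hole C' Y0) (Nest {#} \<theta> C0)"
        with Nest same show ?thesis
          by (intro disjI2 disjI2 disjI2 exI[of _ \<theta>] exI[of _ C0] exI[of _ Y0]) auto
      qed
    next
      case False
      with eq obtain A0 where
        "A = add_mset (Comp \<eta>' (fill C' Y)) A0" "B = add_mset (Comp \<eta> (fill C X)) A0"
        by (auto simp: add_eq_conv_ex)
      with Nest show ?thesis
        by (intro disjI1 exI[of _ "Par (Nest A0 \<eta> C) (Nest {#} \<eta>' C')"]) auto
    qed
  qed
qed

lemma add_at_hole_as_plug:
  "\<exists>C. add_at_hole K (A + Y) = plug_right C Y \<and> add_at_hole K (A + X) = plug_left C X"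
proof (induction K)
  case (Top \<Delta>)
  show ?case by (rule exI[of _ "Par (Top (\<Delta> + A)) (Top {#})"]) (simp add: ac_simps)
next
  case (Nest \<Delta> \<psi> K)
  then obtain C where
    "add_at_hole K (A + Y) = plug_right C Y" "add_at_hole K (A + X) = plug_left C X"
    by blast
  then show ?case by (intro exI[of _ "Nest2 \<Delta> \<psi> C"]) simp
qed

lemma fill_eq_fill_single_cases:
  assumes "fill H X = fill G {#y#}" "\<forall>\<eta> A. y \<noteq> Comp \<eta> A"
  shows "(\<exists>X0 K A. X = add_mset y X0 \<and> H = add_at_hole K A \<and> G = add_at_hole K (A + X0)) \<or>
    (\<exists>C. H = plug_right C {#y#} \<and> G = plug_left C X) \<or>
    (\<exists>\<eta> C X0. X = add_mset (Comp \<eta> (fill C {#y#})) X0 \<and>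
       G = ctx_comp (add_at_hole H X0) (Nest {#} \<eta> C))"
  using fill_eq_fill_cases[OF assms(1)]
proof (elim disjE exE conjE)
  fix K A B
  assume H: "H = add_at_hole K A" and G: "G = add_at_hole K B" and "A + X = B + {#y#}"
  then have "A + X = add_mset y B" by simp
  then show ?thesis
  proof (cases rule: union_eq_add_mset_cases)
    case (1 X0)
    with H G show ?thesis by blast
  next
    case (2 A0)
    with H G add_at_hole_as_plug[of K A0 "{#y#}" X] show ?thesis by auto
  qed
next
  fix \<eta> C Y0
  assume "{#y#} = add_mset (Comp \<eta> (fill C X)) Y0"
  with assms(2) show ?thesis by auto
qed blast+

lemma fill_eq_fill_single_flat:
  assumes "fill H X = fill G {#y#}" "y \<notin># X" "\<forall>x\<in>#X. \<forall>\<eta> A. x \<noteq> Comp \<eta> A"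
    "\<forall>\<eta> A. y \<noteq> Comp \<eta> A"
  obtains C where "H = plug_right C {#y#}" "G = plug_left C X"
  using fill_eq_fill_single_cases[OF assms(1,4)] assms(2,3) that by auto

text \<open>Permuting a cut through its left premiss \<open>\<Gamma>\<^sup>\<down>{\<xi>\<^sup>\<circ>}\<close> requires lifting decompositions of
  \<open>\<Gamma>\<^sup>\<down>\<close> back to \<open>\<Gamma>\<close>; the output formulas removed by stripping go into the context, never into
  the hole.\<close>

lemma strip_eq_fill_lift:
  "strip M = fill K X \<Longrightarrow> \<exists>K' X'. M = fill K' X' \<and> down K' = K \<and> strip X' = X \<and> top_out_free X'"
proof (induction K arbitrary: M)
  case (Top \<Delta>)
  then obtain M1 M2 where "M = M1 + M2" "strip M1 = \<Delta>" "strip M2 = X" "top_out_free M2"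
    using strip_eq_union[of M \<Delta> X] by auto
  then show ?case by (intro exI[of _ "Top M1"] exI[of _ M2]) simp
next
  case (Nest \<Delta> \<psi> K)
  then obtain M1 M2 where M: "M = M1 + M2" "strip M1 = \<Delta>" "strip M2 = {#Comp \<psi> (fill K X)#}"
    using strip_eq_union[of M \<Delta> "{#Comp \<psi> (fill K X)#}"] by auto
  then obtain x Os where "M2 = add_mset x Os" "strip_item x = Comp \<psi> (fill K X)" "strip Os = {#}"
    using strip_eq_add_mset[of M2 "Comp \<psi> (fill K X)" "{#}"] by auto
  moreover from this(2) obtain N where "x = Comp \<psi> N" "strip N = fill K X"
    by (auto simp: strip_item_eq_Comp_iff)
  moreover from Nest.IH[OF this(2)] obtain K' X' where
    "N = fill K' X'" "down K' = K" "strip X' = X" "top_out_free X'"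
    by blast
  ultimately show ?case
    using M by (intro exI[of _ "Nest (M1 + Os) \<psi> K'"] exI[of _ X']) (auto simp: ac_simps)
qed

lemma down_eq_add_outer_lift:
  assumes "down G = add_outer K M"
  shows "\<exists>K' M'. G = add_outer K' M' \<and> down K' = K \<and> strip M' = M"
proof (cases G)
  case (Top \<Delta>)
  with assms obtain \<Delta>k where "K = Top \<Delta>k" "strip \<Delta> = \<Delta>k + M" by (cases K) auto
  moreover obtain M1 M2 where "\<Delta> = M1 + M2" "strip M1 = \<Delta>k" "strip M2 = M"
    using strip_eq_union[OF calculation(2)] by blast
  ultimately show ?thesis using Top by (intro exI[of _ "Top M1"] exI[of _ M2]) simp
next
  case (Nest \<Delta> \<psi> C)
  with assms obtain \<Delta>k where "K = Nest \<Delta>k \<psi> (down C)" "strip \<Delta> = \<Delta>k + M" by (cases K) auto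
  moreover obtain M1 M2 where "\<Delta> = M1 + M2" "strip M1 = \<Delta>k" "strip M2 = M"
    using strip_eq_union[OF calculation(2)] by blast
  ultimately show ?thesis using Nest by (intro exI[of _ "Nest M1 \<psi> C"] exI[of _ M2]) simp
qed

lemma down_eq_Nest_lift:
  "down K = Nest \<Delta> \<eta> C \<Longrightarrow> \<exists>\<Delta>' C'. K = Nest \<Delta>' \<eta> C' \<and> strip \<Delta>' = \<Delta> \<and> down C' = C"
  by (cases K) auto

lemma down_eq_plug_left_lift:
  "down G = plug_left C X \<Longrightarrow>
   \<exists>C' X'. G = plug_left C' X' \<and> down2 C' = C \<and> strip X' = X \<and> top_out_free X'"
proof (induction C arbitrary: G)
  case (Par K1 K2)
  then obtain K2' M where "G = add_outer K2' M" "down K2' = K2" "strip M = fill K1 X"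
    using down_eq_add_outer_lift[of G K2 "fill K1 X"] by auto
  moreover from strip_eq_fill_lift[OF this(3)] obtain K1' X' where
    "M = fill K1' X'" "down K1' = K1" "strip X' = X" "top_out_free X'"
    by blast
  ultimately show ?case by (intro exI[of _ "Par K1' K2'"] exI[of _ X']) auto
next
  case (Nest2 \<Delta> \<psi> C)
  then obtain \<Delta>' C1 where "G = Nest \<Delta>' \<psi> C1" "strip \<Delta>' = \<Delta>" "down C1 = plug_left C X"
    using down_eq_Nest_lift[of G \<Delta> \<psi> "plug_left C X"] by auto
  moreover from Nest2.IH[OF this(3)] obtain C' X' where
    "C1 = plug_left C' X'" "down2 C' = C" "strip X' = X" "top_out_free X'"
    by blast
  ultimately show ?case by (intro exI[of _ "Nest2 \<Delta>' \<psi> C'"] exI[of _ X']) auto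
qed

lemma down_eq_add_at_hole_lift:
  "down K = add_at_hole H M \<Longrightarrow>
   \<exists>H' M'. K = add_at_hole H' M' \<and> down H' = H \<and> strip M' = M \<and> top_out_free M'"
proof (induction H arbitrary: K)
  case (Top \<Delta>)
  then obtain \<Delta>k where "K = Top \<Delta>k" "strip \<Delta>k = \<Delta> + M" by (cases K) auto
  moreover obtain M1 M2 where "\<Delta>k = M1 + M2" "strip M1 = \<Delta>" "strip M2 = M" "top_out_free M2"
    using strip_eq_union[OF calculation(2)] by blast
  ultimately show ?case by (intro exI[of _ "Top M1"] exI[of _ M2]) simp
next
  case (Nest \<Delta> \<psi> C)
  then obtain \<Delta>k Ck where "K = Nest \<Delta>k \<psi> Ck" "strip \<Delta>k = \<Delta>" "down Ck = add_at_hole C M"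
    by (cases K) auto
  moreover obtain H' M' where
    "Ck = add_at_hole H' M'" "down H' = C" "strip M' = M" "top_out_free M'"
    using Nest.IH[OF calculation(3)] by blast
  ultimately show ?case by (intro exI[of _ "Nest \<Delta>k \<psi> H'"] exI[of _ M']) simp
qed

lemma down_eq_ctx_comp_lift:
  "down G = ctx_comp K1 K2 \<Longrightarrow> \<exists>K1' K2'. G = ctx_comp K1' K2' \<and> down K1' = K1 \<and> down K2' = K2"
proof (induction K1 arbitrary: G)
  case (Top \<Delta>)
  then obtain K' M where "G = add_outer K' M" "down K' = K2" "strip M = \<Delta>"
    using down_eq_add_outer_lift[of G K2 \<Delta>] by auto
  then show ?case by (intro exI[of _ "Top M"] exI[of _ K']) auto
next
  case (Nest \<Delta> \<psi> C)
  then obtain \<Delta>' C1 where "G = Nest \<Delta>' \<psi> C1" "strip \<Delta>' = \<Delta>" "down C1 = ctx_comp C K2"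
    using down_eq_Nest_lift[of G \<Delta> \<psi> "ctx_comp C K2"] by auto
  moreover obtain K1' K2' where "C1 = ctx_comp K1' K2'" "down K1' = C" "down K2' = K2"
    using Nest.IH[OF calculation(3)] by blast
  ultimately show ?case by (intro exI[of _ "Nest \<Delta>' \<psi> K1'"] exI[of _ K2']) simp
qed

lemma down_eq_deep_lift:
  assumes "down G = ctx_comp (add_at_hole H X0) (Nest {#} \<eta> C0)"
  shows "\<exists>H' X0' C0'. G = ctx_comp (add_at_hole H' X0') (Nest {#} \<eta> C0') \<and> down H' = H \<and>
    strip X0' = X0 \<and> top_out_free X0' \<and> down C0' = C0"
proof -
  obtain K1 K2 where G: "G = ctx_comp K1 K2" "down K1 = add_at_hole H X0" "down K2 = Nest {#} \<eta> C0"
    using down_eq_ctx_comp_lift[OF assms] by blast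
  obtain H' X0' where
    K1: "K1 = add_at_hole H' X0'" "down H' = H" "strip X0' = X0" "top_out_free X0'"
    using down_eq_add_at_hole_lift[OF G(2)] by blast
  obtain \<Delta> C0' where K2: "K2 = Nest \<Delta> \<eta> C0'" "strip \<Delta> = {#}" "down C0' = C0"
    using down_eq_Nest_lift[OF G(3)] by blast
  have "G = ctx_comp (add_at_hole (add_at_hole H' \<Delta>) X0') (Nest {#} \<eta> C0')"
    using G(1) K1(1) K2(1) ctx_comp_Nest[of "add_at_hole H' X0'" \<Delta> \<eta> C0'] by (simp add: ac_simps)
  moreover have "down (add_at_hole H' \<Delta>) = H" using K1(2) K2(2) by simp
  ultimately show ?thesis using K1 K2 by blast
qed

lemma down_eq_plug_left_In:
  assumes "down G = plug_left C {#In \<phi>#}"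
  obtains C' where "G = plug_left C' {#In \<phi>#}" "down2 C' = C"
  using down_eq_plug_left_lift[OF assms] top_out_free_strip_In that by blast

lemma down_eq_plug_left_outs: "down G = plug_left C X \<Longrightarrow> outs X = 0"
  by (metis ctx_outs_down ctx_outs_plug_left add_is_0)

section \<open>Structural simulation\<close>

text \<open>\<open>inverts_to x I\<close>: \<open>I\<close> is \<open>x\<close> itself or the active part of a premiss of an invertible rule
  with principal item \<open>x\<close> (for \<open>\<rightarrow>\<^sup>\<bullet>\<close> only the right premiss is invertible).\<close>

fun inverts_In :: "'a fm \<Rightarrow> 'a seq \<Rightarrow> bool" where
  "inverts_In (Conj \<phi> \<psi>) I \<longleftrightarrow> I = {#In \<phi>, In \<psi>#}"
| "inverts_In (Disj \<phi> \<psi>) I \<longleftrightarrow> I = {#In \<phi>#} \<or> I = {#In \<psi>#}"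
| "inverts_In (Imp \<phi> \<psi>) I \<longleftrightarrow> I = {#In \<psi>#}"
| "inverts_In (DiaArr \<phi> \<psi>) I \<longleftrightarrow> I = {#Comp \<phi> {#In \<psi>#}#}"
| "inverts_In _ I \<longleftrightarrow> False"

fun inverts_Out :: "'a fm \<Rightarrow> 'a seq \<Rightarrow> bool" where
  "inverts_Out (Conj \<phi> \<psi>) I \<longleftrightarrow> I = {#Out \<phi>#} \<or> I = {#Out \<psi>#}"
| "inverts_Out (Imp \<phi> \<psi>) I \<longleftrightarrow> I = {#In \<phi>, Out \<psi>#}"
| "inverts_Out (BoxArr \<phi> \<psi>) I \<longleftrightarrow> I = {#Comp \<phi> {#Out \<psi>#}#}"
| "inverts_Out _ I \<longleftrightarrow> False"

fun inverts_to :: "'a item \<Rightarrow> 'a seq \<Rightarrow> bool" where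
  "inverts_to (In \<phi>) I \<longleftrightarrow> I = {#In \<phi>#} \<or> inverts_In \<phi> I"
| "inverts_to (Out \<phi>) I \<longleftrightarrow> I = {#Out \<phi>#} \<or> inverts_Out \<phi> I"
| "inverts_to (Comp \<psi> A) I \<longleftrightarrow> False"

lemma outs_inverts_to: "inverts_to x I \<Longrightarrow> outs I = outs_item x"
proof (cases x)
  case (In \<phi>)
  then show "inverts_to x I \<Longrightarrow> ?thesis" by (cases \<phi>) auto
next
  case (Out \<phi>)
  then show "inverts_to x I \<Longrightarrow> ?thesis" by (cases \<phi>) auto
qed simp

text \<open>\<open>struct_sim Q S T\<close>: \<open>T\<close> is obtained from \<open>S\<close> by rewriting disjoint pieces, inside
  components recursively, and adding output-free material. For \<open>Q = (=)\<close> this covers weakening, inversion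
  and contraction.\<close>

inductive sim_piece ::
  "('a fm \<Rightarrow> 'a fm \<Rightarrow> bool) \<Rightarrow> ('a seq \<Rightarrow> 'a seq \<Rightarrow> bool) \<Rightarrow> 'a seq \<Rightarrow> 'a seq \<Rightarrow> bool"
  for Q R where
  piece_inverts: "inverts_to x I \<Longrightarrow> sim_piece Q R {#x#} I"
| piece_contract: "sim_piece Q R {#In (Atom p), In (Atom p)#} {#In (Atom p)#}"
| piece_Comp: "R A B \<Longrightarrow> Q \<phi> \<psi> \<Longrightarrow> sim_piece Q R {#Comp \<phi> A#} {#Comp \<psi> B#}"
| piece_merge: "R (A1 + A2) B \<Longrightarrow> Q \<phi>1 \<psi> \<Longrightarrow> Q \<phi>2 \<psi> \<Longrightarrow>
    sim_piece Q R {#Comp \<phi>1 A1, Comp \<phi>2 A2#} {#Comp \<psi> B#}"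

lemma sim_piece_mono_rel:
  "sim_piece Q R P P' \<Longrightarrow> (\<And>A B. R A B \<Longrightarrow> R' A B) \<Longrightarrow> sim_piece Q R' P P'"
  by (auto elim!: sim_piece.cases intro: sim_piece.intros)

lemma sim_piece_mono [mono]: "R \<le> R' \<Longrightarrow> sim_piece Q R \<le> sim_piece Q R'"
  by (auto intro: sim_piece_mono_rel)

inductive struct_sim :: "('a fm \<Rightarrow> 'a fm \<Rightarrow> bool) \<Rightarrow> 'a seq \<Rightarrow> 'a seq \<Rightarrow> bool" for Q where
  struct_sim_weaken: "outs W = 0 \<Longrightarrow> struct_sim Q {#} W"
| struct_sim_add:
    "sim_piece Q (struct_sim Q) P P' \<Longrightarrow> struct_sim Q S T \<Longrightarrow> struct_sim Q (P + S) (P' + T)"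

lemma struct_sim_outs: "struct_sim Q S T \<Longrightarrow> outs T = outs S"
proof (induction rule: struct_sim.induct)
  case (struct_sim_add P P' S T)
  from struct_sim_add.IH(1) have "outs P' = outs P"
    by cases (auto simp: outs_inverts_to)
  with struct_sim_add.IH(2) show ?case by simp
qed simp

lemma struct_sim_is_nested: "struct_sim Q S T \<Longrightarrow> is_nested S \<Longrightarrow> is_nested T"
  by (simp add: is_nested_def struct_sim_outs)

lemma struct_sim_add_piece:
  "sim_piece Q (\<lambda>A B. struct_sim Q A B \<and> R A B) P P' \<Longrightarrow> struct_sim Q S T \<Longrightarrow>
   struct_sim Q (P + S) (P' + T)"
  by (rule struct_sim_add) (auto elim: sim_piece_mono_rel)

lemma struct_sim_piece: "sim_piece Q (struct_sim Q) P P' \<Longrightarrow> struct_sim Q P P'"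
  using struct_sim_add[of Q P P' "{#}" "{#}"] by (simp add: struct_sim_weaken)

lemma struct_sim_weaken_right: "struct_sim Q S T \<Longrightarrow> outs W = 0 \<Longrightarrow> struct_sim Q S (T + W)"
proof (induction rule: struct_sim.induct)
  case (struct_sim_add P P' S T)
  then show ?case
    using struct_sim_add_piece[OF struct_sim_add.IH(1), of S "T + W"] by (simp add: ac_simps)
qed (simp add: struct_sim_weaken)

lemma struct_sim_union:
  "struct_sim Q S T \<Longrightarrow> struct_sim Q S' T' \<Longrightarrow> struct_sim Q (S + S') (T + T')"
proof (induction rule: struct_sim.induct)
  case (struct_sim_weaken W)
  then show ?case using struct_sim_weaken_right[of Q S' T' W] by (simp add: ac_simps)
next
  case (struct_sim_add P P' S T)
  then show ?case
    using struct_sim_add_piece[OF struct_sim_add.IH(1), of "S + S'" "T + T'"]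
    by (simp add: ac_simps)
qed

lemma struct_sim_refl:
  assumes "\<And>\<phi>. Q \<phi> \<phi>"
  shows "struct_sim Q S S"
proof -
  have item: "struct_sim Q {#x#} {#x#}" for x
  proof (induction x)
    case (Comp \<psi> A)
    have "struct_sim Q A A"
      using Comp
    proof (induction A)
      case (add x A)
      then show ?case using struct_sim_union[of Q "{#x#}" "{#x#}" A A] by simp
    qed (simp add: struct_sim_weaken)
    then show ?case by (simp add: struct_sim_piece piece_Comp assms)
  qed (simp_all add: struct_sim_piece piece_inverts)
  show ?thesis
  proof (induction S)
    case (add x S)
    then show ?case using struct_sim_union[OF item[of x]] by simp
  qed (simp add: struct_sim_weaken)
qed

lemma struct_sim_union_refl:
  assumes "\<And>\<phi>. Q \<phi> \<phi>" "struct_sim Q S T"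
  shows "struct_sim Q (M + S) (M + T)"
  by (rule struct_sim_union[OF struct_sim_refl[OF assms(1)] assms(2)])

lemma struct_sim_fill:
  assumes "\<And>\<phi>. Q \<phi> \<phi>" "struct_sim Q A B"
  shows "struct_sim Q (fill K A) (fill K B)"
proof (induction K)
  case (Top \<Delta>)
  then show ?case using struct_sim_union_refl[of Q, OF assms(1,2)] by simp
next
  case (Nest \<Delta> \<psi> C)
  have "struct_sim Q {#Comp \<psi> (fill C A)#} {#Comp \<psi> (fill C B)#}"
    by (simp add: struct_sim_piece piece_Comp Nest.IH assms(1))
  from struct_sim_union_refl[of Q, OF assms(1) this, of \<Delta>] show ?case by simp
qed

lemma struct_sim_weaken_Comp:
  assumes "outs E = 0"
  shows "struct_sim (=) (add_mset (Comp \<eta> N) M) (add_mset (Comp \<eta> (E + N)) M)"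
proof -
  have "struct_sim (=) N (E + N)"
    using struct_sim_weaken_right[OF struct_sim_refl assms, of "(=)" N] by (simp add: add.commute)
  then have "sim_piece (=) (struct_sim (=)) {#Comp \<eta> N#} {#Comp \<eta> (E + N)#}"
    by (simp add: piece_Comp)
  from struct_sim_add[OF this struct_sim_refl] show ?thesis by simp
qed

lemma strip_sim_piece:
  assumes "sim_piece Q (\<lambda>A B. struct_sim Q (strip A) (strip B)) P P'"
  shows "struct_sim Q (strip P) (strip P')"
  using assms
proof cases
  case (piece_inverts x)
  show ?thesis
  proof (cases x)
    case (In \<phi>)
    with piece_inverts have "inverts_to (In \<phi>) (strip P')"
      by (cases \<phi>) auto
    then have "struct_sim Q {#In \<phi>#} (strip P')"
      by (rule struct_sim_piece[OF sim_piece.piece_inverts])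
    with piece_inverts In show ?thesis by simp
  next
    case (Out \<phi>)
    with piece_inverts show ?thesis by (simp add: struct_sim_weaken)
  qed (use piece_inverts in simp)
qed (auto intro: struct_sim_piece sim_piece.intros)

lemma struct_sim_strip: "struct_sim Q S T \<Longrightarrow> struct_sim Q (strip S) (strip T)"
proof (induction rule: struct_sim.induct)
  case (struct_sim_add P P' S T)
  have "struct_sim Q (strip P) (strip P')"
    using struct_sim_add.IH(1) by (auto intro: strip_sim_piece elim: sim_piece_mono_rel)
  then show ?case using struct_sim_union struct_sim_add.IH(2) by simp
qed (simp add: struct_sim_weaken)

lemma struct_sim_item_inv:
  assumes "struct_sim Q (add_mset x S) T" "\<forall>\<phi> A. x \<noteq> Comp \<phi> A" "\<forall>p. x \<noteq> In (Atom p)"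
  obtains I T0 where "T = I + T0" "inverts_to x I" "struct_sim Q S T0"
proof -
  have "\<exists>I T0. T = I + T0 \<and> inverts_to x I \<and> struct_sim Q (S' - {#x#}) T0"
    if "struct_sim Q S' T" "x \<in># S'" for S'
    using that
  proof (induction rule: struct_sim.induct)
    case (struct_sim_add P P' S T)
    show ?case
    proof (cases "x \<in># S")
      case True
      then obtain I T0 where IH: "T = I + T0" "inverts_to x I" "struct_sim Q (S - {#x#}) T0"
        using struct_sim_add.IH(2) by blast
      have "struct_sim Q (P + (S - {#x#})) (P' + T0)"
        by (rule struct_sim_add_piece[OF struct_sim_add.IH(1) IH(3)])
      moreover have "P + S - {#x#} = P + (S - {#x#})"
        using True by (rule diff_union_single_conv)
      moreover have "P' + T = I + (P' + T0)"
        using IH(1) by (simp add: ac_simps)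
      ultimately show ?thesis
        using IH(2) by (intro exI[of _ I] exI[of _ "P' + T0"] conjI) simp_all
    next
      case False
      with struct_sim_add.prems have "x \<in># P" by simp
      with struct_sim_add.IH(1) assms(2,3) have "P = {#x#} \<and> inverts_to x P'"
        by (cases rule: sim_piece.cases) auto
      with struct_sim_add.hyps show ?thesis
        by (intro exI[of _ P'] exI[of _ T]) simp
    qed
  qed simp
  from this[OF assms(1)] obtain I T0 where "T = I + T0" "inverts_to x I" "struct_sim Q S T0"
    by auto
  then show ?thesis by (rule that)
qed

lemma struct_sim_Atom_mem: "struct_sim Q S T \<Longrightarrow> In (Atom p) \<in># S \<Longrightarrow> In (Atom p) \<in># T"
proof (induction rule: struct_sim.induct)
  case (struct_sim_add P P' S T)
  show ?case
  proof (cases "In (Atom p) \<in># S")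
    case False
    with struct_sim_add.prems have "In (Atom p) \<in># P" by simp
    with struct_sim_add.IH(1) show ?thesis
      by (cases rule: sim_piece.cases) auto
  qed (simp add: struct_sim_add.IH(2))
qed simp

text \<open>\<open>A'\<close> is the contents of the sibling merged into the image of the component, if any.\<close>

lemma sim_piece_Comp_inv:
  assumes "sim_piece Q R P P'" "Comp \<phi> A \<in># P"
  obtains \<psi> B A' where "P' = {#Comp \<psi> B#}" "Q \<phi> \<psi>" "R (A + A') B"
    "\<And>A0 B0. R (A0 + A') B0 \<Longrightarrow>
       sim_piece Q R (add_mset (Comp \<phi> A0) (P - {#Comp \<phi> A#})) {#Comp \<psi> B0#}"
    "\<And>A0 B0. R (A0 + strip A') B0 \<Longrightarrow>
       sim_piece Q R (add_mset (Comp \<phi> A0) (strip (P - {#Comp \<phi> A#}))) {#Comp \<psi> B0#}"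
  using assms
proof cases
  case (piece_Comp A1 B \<phi>1 \<psi>)
  with assms(2) show ?thesis
    by (intro that[of \<psi> B "{#}"]) (simp_all add: sim_piece.piece_Comp)
next
  case (piece_merge A1 A2 B \<phi>1 \<psi> \<phi>2)
  with assms(2) consider "Comp \<phi> A = Comp \<phi>1 A1" | "Comp \<phi> A = Comp \<phi>2 A2" by auto
  then show ?thesis
  proof cases
    case 1
    with piece_merge show ?thesis
      by (intro that[of \<psi> B A2]) (simp_all add: sim_piece.piece_merge)
  next
    case 2
    with piece_merge show ?thesis
      by (intro that[of \<psi> B A1])
        (simp_all add: add.commute add_mset_commute sim_piece.piece_merge)
  qed
qed auto

lemma struct_sim_Comp_inv:
  assumes "struct_sim Q (add_mset (Comp \<phi> A) S) T"
  obtains \<psi> B T0 A' where "T = add_mset (Comp \<psi> B) T0" "Q \<phi> \<psi>" "struct_sim Q (A + A') B"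
    "\<And>A0 B0. struct_sim Q (A0 + A') B0 \<Longrightarrow>
       struct_sim Q (add_mset (Comp \<phi> A0) S) (add_mset (Comp \<psi> B0) T0)"
    "\<And>A0 B0. struct_sim Q (A0 + strip A') B0 \<Longrightarrow>
       struct_sim Q (add_mset (Comp \<phi> A0) (strip S)) (add_mset (Comp \<psi> B0) (strip T0))"
proof -
  let ?c = "Comp \<phi> A"
  have "\<exists>\<psi> B T0 A'. T = add_mset (Comp \<psi> B) T0 \<and> Q \<phi> \<psi> \<and> struct_sim Q (A + A') B \<and>
     (\<forall>A0 B0. struct_sim Q (A0 + A') B0 \<longrightarrow>
       struct_sim Q (add_mset (Comp \<phi> A0) (S' - {#?c#})) (add_mset (Comp \<psi> B0) T0)) \<and>
     (\<forall>A0 B0. struct_sim Q (A0 + strip A') B0 \<longrightarrow>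
       struct_sim Q (add_mset (Comp \<phi> A0) (strip (S' - {#?c#}))) (add_mset (Comp \<psi> B0) (strip T0)))"
    if "struct_sim Q S' T" "?c \<in># S'" for S'
    using that
  proof (induction rule: struct_sim.induct)
    case (struct_sim_add P P' S T)
    have piece: "sim_piece Q (struct_sim Q) P P'"
      using struct_sim_add.IH(1) by (rule sim_piece_mono_rel) simp
    have strip_piece: "struct_sim Q (strip P) (strip P')"
      using piece by (rule strip_sim_piece[OF sim_piece_mono_rel]) (rule struct_sim_strip)
    show ?case
    proof (cases "?c \<in># S")
      case True
      then obtain \<psi> B T0 A' where IH: "T = add_mset (Comp \<psi> B) T0" "Q \<phi> \<psi>" "struct_sim Q (A + A') B"
        "\<And>A0 B0. struct_sim Q (A0 + A') B0 \<Longrightarrow>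
           struct_sim Q (add_mset (Comp \<phi> A0) (S - {#?c#})) (add_mset (Comp \<psi> B0) T0)"
        "\<And>A0 B0. struct_sim Q (A0 + strip A') B0 \<Longrightarrow>
           struct_sim Q (add_mset (Comp \<phi> A0) (strip (S - {#?c#})))
             (add_mset (Comp \<psi> B0) (strip T0))"
        using struct_sim_add.IH(2) by blast
      have rest: "P + S - {#?c#} = P + (S - {#?c#})"
        using True by (rule diff_union_single_conv)
      show ?thesis
      proof (rule exI[of _ \<psi>], rule exI[of _ B], rule exI[of _ "P' + T0"], rule exI[of _ A'],
          intro conjI allI impI)
        fix A0 B0
        assume "struct_sim Q (A0 + A') B0"
        from struct_sim.struct_sim_add[OF piece IH(4)[OF this]]
        show "struct_sim Q (add_mset (Comp \<phi> A0) (P + S - {#?c#})) (add_mset (Comp \<psi> B0) (P' + T0))"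
          by (simp add: rest)
      next
        fix A0 B0
        assume "struct_sim Q (A0 + strip A') B0"
        from struct_sim_union[OF strip_piece IH(5)[OF this]]
        show "struct_sim Q (add_mset (Comp \<phi> A0) (strip (P + S - {#?c#})))
            (add_mset (Comp \<psi> B0) (strip (P' + T0)))"
          by (simp add: rest)
      qed (use IH(1-3) in simp_all)
    next
      case False
      with struct_sim_add.prems have "?c \<in># P" by simp
      with piece obtain \<psi> B A' where P': "P' = {#Comp \<psi> B#}" "Q \<phi> \<psi>" "struct_sim Q (A + A') B"
        and repl: "\<And>A0 B0. struct_sim Q (A0 + A') B0 \<Longrightarrow>
          sim_piece Q (struct_sim Q) (add_mset (Comp \<phi> A0) (P - {#?c#})) {#Comp \<psi> B0#}"
        and repl_strip: "\<And>A0 B0. struct_sim Q (A0 + strip A') B0 \<Longrightarrow>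
          sim_piece Q (struct_sim Q) (add_mset (Comp \<phi> A0) (strip (P - {#?c#}))) {#Comp \<psi> B0#}"
        by (rule sim_piece_Comp_inv) blast
      have rest: "P + S - {#?c#} = (P - {#?c#}) + S"
        using \<open>?c \<in># P\<close> by (metis add.commute diff_union_single_conv)
      show ?thesis
      proof (rule exI[of _ \<psi>], rule exI[of _ B], rule exI[of _ T], rule exI[of _ A'],
          intro conjI allI impI)
        fix A0 B0
        assume "struct_sim Q (A0 + A') B0"
        from struct_sim.struct_sim_add[OF repl[OF this] struct_sim_add.hyps]
        show "struct_sim Q (add_mset (Comp \<phi> A0) (P + S - {#?c#})) (add_mset (Comp \<psi> B0) T)"
          by (simp add: rest)
      next
        fix A0 B0
        assume "struct_sim Q (A0 + strip A') B0"
        from struct_sim.struct_sim_add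
            [OF repl_strip[OF this] struct_sim_strip[OF struct_sim_add.hyps]]
        show "struct_sim Q (add_mset (Comp \<phi> A0) (strip (P + S - {#?c#})))
            (add_mset (Comp \<psi> B0) (strip T))"
          by (simp add: rest)
      qed (use P' in simp_all)
    qed
  qed simp
  from this[OF assms(1), simplified] show ?thesis
    by (elim exE conjE) (rule that; blast)
qed

text \<open>\<open>W\<close> is the material at the level of the hole that is simulated together with the hole
  contents.\<close>

lemma struct_sim_fill_decompose:
  assumes "struct_sim Q (fill C X + E) T"
  shows "\<exists>G' Z W. T = fill G' Z \<and> struct_sim Q (X + W) Z \<and>
    (\<forall>Y Z'. struct_sim Q (Y + W) Z' \<longrightarrow> struct_sim Q (fill C Y + E) (fill G' Z')) \<and>
    (\<forall>Y Z'. struct_sim Q (Y + strip W) Z' \<longrightarrow>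
       struct_sim Q (fill (down C) Y + strip E) (fill (down G') Z'))"
  using assms
proof (induction C arbitrary: E T)
  case (Top \<Delta>)
  show ?case
    by (rule exI[of _ "Top {#}"], rule exI[of _ T], rule exI[of _ "\<Delta> + E"])
      (use Top in \<open>simp add: ac_simps\<close>)
next
  case (Nest \<Delta> \<psi> C)
  have "struct_sim Q (add_mset (Comp \<psi> (fill C X)) (\<Delta> + E)) T"
    using Nest.prems by (simp add: ac_simps)
  then obtain \<psi>' B T0 A' where T: "T = add_mset (Comp \<psi>' B) T0"
    and B: "struct_sim Q (fill C X + A') B"
    and repl: "\<And>A0 B0. struct_sim Q (A0 + A') B0 \<Longrightarrow>
      struct_sim Q (add_mset (Comp \<psi> A0) (\<Delta> + E)) (add_mset (Comp \<psi>' B0) T0)"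
    and repl_strip: "\<And>A0 B0. struct_sim Q (A0 + strip A') B0 \<Longrightarrow>
      struct_sim Q (add_mset (Comp \<psi> A0) (strip (\<Delta> + E))) (add_mset (Comp \<psi>' B0) (strip T0))"
    by (rule struct_sim_Comp_inv) blast
  from Nest.IH[OF B] obtain G'' Z W where IH: "B = fill G'' Z" "struct_sim Q (X + W) Z"
    "\<forall>Y Z'. struct_sim Q (Y + W) Z' \<longrightarrow> struct_sim Q (fill C Y + A') (fill G'' Z')"
    "\<forall>Y Z'. struct_sim Q (Y + strip W) Z' \<longrightarrow>
       struct_sim Q (fill (down C) Y + strip A') (fill (down G'') Z')"
    by blast
  show ?case
  proof (rule exI[of _ "Nest T0 \<psi>' G''"], rule exI[of _ Z], rule exI[of _ W], intro conjI allI impI)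
    fix Y Z'
    assume "struct_sim Q (Y + W) Z'"
    from repl[OF IH(3)[rule_format, OF this]]
    show "struct_sim Q (fill (Nest \<Delta> \<psi> C) Y + E) (fill (Nest T0 \<psi>' G'') Z')"
      by (simp add: ac_simps)
  next
    fix Y Z'
    assume "struct_sim Q (Y + strip W) Z'"
    from repl_strip[OF IH(4)[rule_format, OF this]]
    show "struct_sim Q (fill (down (Nest \<Delta> \<psi> C)) Y + strip E) (fill (down (Nest T0 \<psi>' G'')) Z')"
      by (simp add: ac_simps)
  qed (use T IH(1,2) in simp_all)
qed

lemma struct_sim_fill_single:
  assumes "struct_sim Q (fill G {#x#}) T" "\<forall>\<phi> A. x \<noteq> Comp \<phi> A" "\<forall>p. x \<noteq> In (Atom p)"
    and refl: "\<And>\<phi>. Q \<phi> \<phi>"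
  obtains G' I where "T = fill G' I" "inverts_to x I"
    "\<And>Y. struct_sim Q (fill G Y) (fill G' Y)"
    "\<And>Y. struct_sim Q (fill (down G) Y) (fill (down G') Y)"
proof -
  obtain G'' Z W where dec: "T = fill G'' Z" "struct_sim Q (add_mset x W) Z"
    "\<forall>Y Z'. struct_sim Q (Y + W) Z' \<longrightarrow> struct_sim Q (fill G Y) (fill G'' Z')"
    "\<forall>Y Z'. struct_sim Q (Y + strip W) Z' \<longrightarrow> struct_sim Q (fill (down G) Y) (fill (down G'') Z')"
    using struct_sim_fill_decompose[of Q G "{#x#}" "{#}" T] assms(1) by auto
  obtain I Z0 where I: "Z = I + Z0" "inverts_to x I" "struct_sim Q W Z0"
    using struct_sim_item_inv[OF dec(2) assms(2,3)] .
  show ?thesis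
  proof (rule that[of "add_at_hole G'' Z0" I])
    fix Y
    show "struct_sim Q (fill G Y) (fill (add_at_hole G'' Z0) Y)"
      using dec(3) struct_sim_union_refl[of Q, OF refl I(3), of Y] by (simp add: ac_simps)
    show "struct_sim Q (fill (down G) Y) (fill (down (add_at_hole G'' Z0)) Y)"
      using dec(4) struct_sim_union_refl[of Q, OF refl struct_sim_strip[OF I(3)], of Y]
      by (simp add: ac_simps)
  qed (use dec(1) I(1,2) in \<open>simp_all add: ac_simps\<close>)
qed

lemma struct_sim_fill_pair_Comp:
  assumes "struct_sim Q (fill G {#x, Comp \<eta> \<Delta>#}) T" "\<And>I. inverts_to x I \<Longrightarrow> I = {#x#}"
    "\<forall>\<phi> A. x \<noteq> Comp \<phi> A" "\<forall>p. x \<noteq> In (Atom p)"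
    and refl: "\<And>\<phi>. Q \<phi> \<phi>"
  obtains G' \<eta>' B where "T = fill G' {#x, Comp \<eta>' B#}" "Q \<eta> \<eta>'"
    "\<And>Y N. struct_sim Q (fill G (add_mset (Comp \<eta> (N + \<Delta>)) Y))
      (fill G' (add_mset (Comp \<eta>' (N + B)) Y))"
proof -
  obtain G'' Z W where dec: "T = fill G'' Z" "struct_sim Q (add_mset x (add_mset (Comp \<eta> \<Delta>) W)) Z"
    "\<forall>Y Z'. struct_sim Q (Y + W) Z' \<longrightarrow> struct_sim Q (fill G Y) (fill G'' Z')"
    using struct_sim_fill_decompose[of Q G "{#x, Comp \<eta> \<Delta>#}" "{#}" T] assms(1) by auto
  obtain I Z0 where I: "Z = I + Z0" "inverts_to x I" "struct_sim Q (add_mset (Comp \<eta> \<Delta>) W) Z0"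
    using struct_sim_item_inv[OF dec(2) assms(3,4)] .
  obtain \<eta>' B T0 A' where C: "Z0 = add_mset (Comp \<eta>' B) T0" "Q \<eta> \<eta>'" "struct_sim Q (\<Delta> + A') B"
    and repl: "\<And>A0 B0. struct_sim Q (A0 + A') B0 \<Longrightarrow>
      struct_sim Q (add_mset (Comp \<eta> A0) W) (add_mset (Comp \<eta>' B0) T0)"
    using I(3) by (rule struct_sim_Comp_inv) blast
  show ?thesis
  proof (rule that[of "add_at_hole G'' T0" \<eta>' B])
    fix Y N
    have "struct_sim Q (N + \<Delta> + A') (N + B)"
      using struct_sim_union_refl[of Q, OF refl C(3), of N] by (simp add: ac_simps)
    from struct_sim_union_refl[of Q, OF refl repl[OF this], of Y]
    show "struct_sim Q (fill G (add_mset (Comp \<eta> (N + \<Delta>)) Y))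
      (fill (add_at_hole G'' T0) (add_mset (Comp \<eta>' (N + B)) Y))"
      using dec(3) by (simp add: ac_simps)
  qed (use dec(1) I(1) assms(2)[OF I(2)] C(1,2) in \<open>simp_all add: add_mset_commute\<close>)
qed

definition interderivable :: "'a fm \<Rightarrow> 'a fm \<Rightarrow> bool" where
  "interderivable \<phi> \<psi> \<longleftrightarrow> derivable False {#In \<phi>, Out \<psi>#} \<and> derivable False {#In \<psi>, Out \<phi>#}"

definition respects_interderivable :: "('a fm \<Rightarrow> 'a fm \<Rightarrow> bool) \<Rightarrow> bool" where
  "respects_interderivable Q \<longleftrightarrow> (\<forall>\<phi> \<psi> \<chi>. Q \<phi> \<psi> \<longrightarrow> interderivable \<chi> \<phi> \<longrightarrow> interderivable \<chi> \<psi>)"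

lemma derivable_struct_sim:
  assumes "derivable False S" "struct_sim Q S T"
    and refl: "\<And>\<phi>. Q \<phi> \<phi>" and resp: "respects_interderivable Q"
  shows "derivable False T"
  using assms(1,2)
proof (induction arbitrary: T rule: derivable.induct)
  case (init G p)
  have nT: "is_nested T" using struct_sim_is_nested init by blast
  obtain G'' Z W where T: "T = fill G'' Z"
    and Z: "struct_sim Q (add_mset (Out (Atom p)) (add_mset (In (Atom p)) W)) Z"
    using struct_sim_fill_decompose[of Q G "{#In (Atom p), Out (Atom p)#}" "{#}" T] init.prems
    by (auto simp: add_mset_commute)
  obtain I Z0 where "Z = I + Z0" "inverts_to (Out (Atom p)) I"
    and Z0: "struct_sim Q (add_mset (In (Atom p)) W) Z0"
    using struct_sim_item_inv[OF Z] by auto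
  moreover obtain Z1 where "Z0 = add_mset (In (Atom p)) Z1"
    using struct_sim_Atom_mem[OF Z0] by (metis multi_member_split union_single_eq_member)
  ultimately show ?case
    using T nT derivable.init[where G = "add_at_hole G'' Z1" and c = False]
    by (simp add: add_mset_commute)
next
  case (botL G)
  have nT: "is_nested T" using struct_sim_is_nested botL by blast
  obtain G' I where "T = fill G' I" "inverts_to (In Bot) I"
    by (rule struct_sim_fill_single[OF botL.prems _ _ refl]) auto
  with nT show ?case by (auto intro: derivable.botL)
next
  case (conjL G \<phi> \<psi>)
  have nT: "is_nested T" using struct_sim_is_nested conjL by blast
  obtain G' I where T: "T = fill G' I" "inverts_to (In (Conj \<phi> \<psi>)) I"
    and "\<And>Y. struct_sim Q (fill G Y) (fill G' Y)"
    by (rule struct_sim_fill_single[OF conjL.prems _ _ refl]) auto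
  with conjL.IH have "derivable False (fill G' {#In \<phi>, In \<psi>#})" by blast
  with T nT show ?case by (auto intro: derivable.conjL dest: derivable_is_nested)
next
  case (conjR G \<phi> \<psi>)
  have nT: "is_nested T" using struct_sim_is_nested conjR by blast
  obtain G' I where T: "T = fill G' I" "inverts_to (Out (Conj \<phi> \<psi>)) I"
    and "\<And>Y. struct_sim Q (fill G Y) (fill G' Y)"
    by (rule struct_sim_fill_single[OF conjR.prems _ _ refl]) auto
  with conjR.IH have "derivable False (fill G' {#Out \<phi>#})" "derivable False (fill G' {#Out \<psi>#})"
    by blast+
  with T nT show ?case by (auto intro: derivable.conjR dest: derivable_is_nested)
next
  case (disjL G \<phi> \<psi>)
  have nT: "is_nested T" using struct_sim_is_nested disjL by blast
  obtain G' I where T: "T = fill G' I" "inverts_to (In (Disj \<phi> \<psi>)) I"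
    and "\<And>Y. struct_sim Q (fill G Y) (fill G' Y)"
    by (rule struct_sim_fill_single[OF disjL.prems _ _ refl]) auto
  with disjL.IH have "derivable False (fill G' {#In \<phi>#})" "derivable False (fill G' {#In \<psi>#})"
    by blast+
  with T nT show ?case by (auto intro: derivable.disjL dest: derivable_is_nested)
next
  case (disjR1 G \<phi> \<psi>)
  have nT: "is_nested T" using struct_sim_is_nested disjR1 by blast
  obtain G' I where T: "T = fill G' I" "inverts_to (Out (Disj \<phi> \<psi>)) I"
    and "\<And>Y. struct_sim Q (fill G Y) (fill G' Y)"
    by (rule struct_sim_fill_single[OF disjR1.prems _ _ refl]) auto
  with disjR1.IH have "derivable False (fill G' {#Out \<phi>#})" by blast
  with T nT show ?case by (auto intro: derivable.disjR1 dest: derivable_is_nested)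
next
  case (disjR2 G \<psi> \<phi>)
  have nT: "is_nested T" using struct_sim_is_nested disjR2 by blast
  obtain G' I where T: "T = fill G' I" "inverts_to (Out (Disj \<phi> \<psi>)) I"
    and "\<And>Y. struct_sim Q (fill G Y) (fill G' Y)"
    by (rule struct_sim_fill_single[OF disjR2.prems _ _ refl]) auto
  with disjR2.IH have "derivable False (fill G' {#Out \<psi>#})" by blast
  with T nT show ?case by (auto intro: derivable.disjR2 dest: derivable_is_nested)
next
  case (impL G \<phi> \<psi>)
  have nT: "is_nested T" using struct_sim_is_nested impL by blast
  obtain G' I where T: "T = fill G' I" "inverts_to (In (Imp \<phi> \<psi>)) I"
    and "\<And>Y. struct_sim Q (fill G Y) (fill G' Y)"
      "\<And>Y. struct_sim Q (fill (down G) Y) (fill (down G') Y)"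
    by (rule struct_sim_fill_single[OF impL.prems _ _ refl]) auto
  with impL.IH have "derivable False (fill (down G') {#In (Imp \<phi> \<psi>), Out \<phi>#})"
    "derivable False (fill G' {#In \<psi>#})"
    by blast+
  with T nT show ?case by (auto intro: derivable.impL dest: derivable_is_nested)
next
  case (impR G \<phi> \<psi>)
  have nT: "is_nested T" using struct_sim_is_nested impR by blast
  obtain G' I where T: "T = fill G' I" "inverts_to (Out (Imp \<phi> \<psi>)) I"
    and "\<And>Y. struct_sim Q (fill G Y) (fill G' Y)"
    by (rule struct_sim_fill_single[OF impR.prems _ _ refl]) auto
  with impR.IH have "derivable False (fill G' {#In \<phi>, Out \<psi>#})" by blast
  with T nT show ?case by (auto intro: derivable.impR dest: derivable_is_nested)
next
  case (boxR G \<phi> \<psi>)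
  have nT: "is_nested T" using struct_sim_is_nested boxR by blast
  obtain G' I where T: "T = fill G' I" "inverts_to (Out (BoxArr \<phi> \<psi>)) I"
    and "\<And>Y. struct_sim Q (fill G Y) (fill G' Y)"
    by (rule struct_sim_fill_single[OF boxR.prems _ _ refl]) auto
  with boxR.IH have "derivable False (fill G' {#Comp \<phi> {#Out \<psi>#}#})" by blast
  with T nT show ?case by (auto intro: derivable.boxR dest: derivable_is_nested)
next
  case (diaL G \<phi> \<psi>)
  have nT: "is_nested T" using struct_sim_is_nested diaL by blast
  obtain G' I where T: "T = fill G' I" "inverts_to (In (DiaArr \<phi> \<psi>)) I"
    and "\<And>Y. struct_sim Q (fill G Y) (fill G' Y)"
    by (rule struct_sim_fill_single[OF diaL.prems _ _ refl]) auto
  with diaL.IH have "derivable False (fill G' {#Comp \<phi> {#In \<psi>#}#})" by blast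
  with T nT show ?case by (auto intro: derivable.diaL dest: derivable_is_nested)
next
  case (boxL \<phi> \<eta> G \<psi> \<Delta>)
  have nT: "is_nested T" using struct_sim_is_nested boxL by blast
  obtain G' \<eta>' B where T: "T = fill G' {#In (BoxArr \<phi> \<psi>), Comp \<eta>' B#}" "Q \<eta> \<eta>'"
    and sim: "\<And>Y N. struct_sim Q (fill G (add_mset (Comp \<eta> (N + \<Delta>)) Y))
      (fill G' (add_mset (Comp \<eta>' (N + B)) Y))"
    by (rule struct_sim_fill_pair_Comp[OF boxL.prems _ _ _ refl]) auto
  have "interderivable \<phi> \<eta>'"
    using resp T(2) boxL.hyps(1,2) unfolding respects_interderivable_def interderivable_def by blast
  moreover have "derivable False (fill G' {#In (BoxArr \<phi> \<psi>), Comp \<eta>' ({#In \<psi>#} + B)#})"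
    using boxL.IH(3) sim[of "{#In \<psi>#}" "{#In (BoxArr \<phi> \<psi>)#}"] by (simp add: add_mset_commute)
  ultimately show ?case
    using T(1) nT by (auto intro: derivable.boxL simp: interderivable_def dest: derivable_is_nested)
next
  case (diaR \<phi> \<eta> G \<psi> \<Delta>)
  have nT: "is_nested T" using struct_sim_is_nested diaR by blast
  obtain G' \<eta>' B where T: "T = fill G' {#Out (DiaArr \<phi> \<psi>), Comp \<eta>' B#}" "Q \<eta> \<eta>'"
    and sim: "\<And>Y N. struct_sim Q (fill G (add_mset (Comp \<eta> (N + \<Delta>)) Y))
      (fill G' (add_mset (Comp \<eta>' (N + B)) Y))"
    by (rule struct_sim_fill_pair_Comp[OF diaR.prems _ _ _ refl]) auto
  have "interderivable \<phi> \<eta>'"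
    using resp T(2) diaR.hyps(1,2) unfolding respects_interderivable_def interderivable_def by blast
  moreover have "derivable False (fill G' {#Comp \<eta>' ({#Out \<psi>#} + B)#})"
    using diaR.IH(3) sim[of "{#Out \<psi>#}" "{#}"] by simp
  ultimately show ?case
    using T(1) nT by (auto intro: derivable.diaR simp: interderivable_def dest: derivable_is_nested)
qed simp

section \<open>Admissible rules\<close>

lemma derivable_struct_sim_eq: "derivable False S \<Longrightarrow> struct_sim (=) S T \<Longrightarrow> derivable False T"
  by (rule derivable_struct_sim[where Q = "(=)"]) (simp_all add: respects_interderivable_def)

lemma derivable_weaken:
  "derivable False (fill K X) \<Longrightarrow> outs E = 0 \<Longrightarrow> derivable False (fill K (X + E))"
  by (erule derivable_struct_sim_eq, intro struct_sim_fill)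
    (simp_all add: struct_sim_weaken_right struct_sim_refl)

lemma derivable_weaken_Comp:
  "derivable False (fill K (add_mset (Comp \<eta> N) M)) \<Longrightarrow> outs E = 0 \<Longrightarrow>
   derivable False (fill K (add_mset (Comp \<eta> (E + N)) M))"
  by (erule derivable_struct_sim_eq, intro struct_sim_fill) (simp_all add: struct_sim_weaken_Comp)

lemma derivable_invert:
  assumes "derivable False (fill K (add_mset x M))" "inverts_to x I"
  shows "derivable False (fill K (I + M))"
proof -
  have "struct_sim (=) ({#x#} + M) (I + M)"
    by (rule struct_sim_add[OF piece_inverts[OF assms(2)] struct_sim_refl]) simp
  with assms(1) show ?thesis
    by (auto intro: derivable_struct_sim_eq struct_sim_fill)
qed

lemma derivable_contract_Atom:
  "derivable False (fill G {#In (Atom p), In (Atom p)#}) \<Longrightarrow> derivable False (fill G {#In (Atom p)#})"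
  by (erule derivable_struct_sim_eq, intro struct_sim_fill)
    (simp_all add: struct_sim_piece piece_contract)

definition cut_admissible :: "'a fm \<Rightarrow> bool" where
  "cut_admissible \<xi> \<longleftrightarrow> (\<forall>G. derivable False (fill (down G) {#Out \<xi>#}) \<longrightarrow>
     derivable False (fill G {#In \<xi>#}) \<longrightarrow> is_nested (fill G {#}) \<longrightarrow> derivable False (fill G {#}))"

lemma cut_admissibleD:
  "cut_admissible \<xi> \<Longrightarrow> derivable False (fill (down G) {#Out \<xi>#}) \<Longrightarrow>
   derivable False (fill G {#In \<xi>#}) \<Longrightarrow> is_nested (fill G {#}) \<Longrightarrow> derivable False (fill G {#})"
  unfolding cut_admissible_def by blast

lemma interderivable_trans:
  assumes "cut_admissible \<phi>" "interderivable \<chi> \<phi>" "interderivable \<phi> \<eta>"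
  shows "interderivable \<chi> \<eta>"
proof -
  have "derivable False (fill (Top {#In \<chi>, Out \<eta>#}) {#})"
  proof (rule cut_admissibleD[OF assms(1)])
    show "derivable False (fill (down (Top {#In \<chi>, Out \<eta>#})) {#Out \<phi>#})"
      using assms(2) by (simp add: interderivable_def add_mset_commute)
    show "derivable False (fill (Top {#In \<chi>, Out \<eta>#}) {#In \<phi>#})"
      using derivable_weaken[of "Top {#}" "{#In \<phi>, Out \<eta>#}" "{#In \<chi>#}"] assms(3)
      by (simp add: interderivable_def add_mset_commute)
  qed (simp add: is_nested_def)
  moreover have "derivable False (fill (Top {#In \<eta>, Out \<chi>#}) {#})"
  proof (rule cut_admissibleD[OF assms(1)])
    show "derivable False (fill (down (Top {#In \<eta>, Out \<chi>#})) {#Out \<phi>#})"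
      using assms(3) by (simp add: interderivable_def add_mset_commute)
    show "derivable False (fill (Top {#In \<eta>, Out \<chi>#}) {#In \<phi>#})"
      using derivable_weaken[of "Top {#}" "{#In \<phi>, Out \<chi>#}" "{#In \<eta>#}"] assms(2)
      by (simp add: interderivable_def add_mset_commute)
  qed (simp add: is_nested_def)
  ultimately show ?thesis by (simp add: interderivable_def)
qed

lemma derivable_merge_Comp:
  assumes "cut_admissible \<phi>" "interderivable \<phi> \<eta>"
    and "derivable False (fill K {#Comp \<phi> A, Comp \<eta> B#})"
  shows "derivable False (fill K {#Comp \<eta> (A + B)#})"
proof (rule derivable_struct_sim[OF assms(3)])
  let ?Q = "\<lambda>\<chi> \<chi>'. \<chi> = \<chi>' \<or> (\<chi> = \<phi> \<and> \<chi>' = \<eta>)"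
  show "\<And>\<chi>. ?Q \<chi> \<chi>" by simp
  show "respects_interderivable ?Q"
    using interderivable_trans[OF assms(1) _ assms(2)] by (auto simp: respects_interderivable_def)
  have "struct_sim ?Q {#Comp \<phi> A, Comp \<eta> B#} {#Comp \<eta> (A + B)#}"
    by (rule struct_sim_piece, rule piece_merge) (simp_all add: struct_sim_refl)
  then show "struct_sim ?Q (fill K {#Comp \<phi> A, Comp \<eta> B#}) (fill K {#Comp \<eta> (A + B)#})"
    by (rule struct_sim_fill[rotated]) simp
qed

section \<open>Cut elimination\<close>

lemma cut_admissible_Conj:
  assumes "cut_admissible \<phi>" "cut_admissible \<psi>"
  shows "cut_admissible (Conj \<phi> \<psi>)"
  unfolding cut_admissible_def
proof (intro allI impI)
  fix G
  assume D: "derivable False (fill (down G) {#Out (Conj \<phi> \<psi>)#})"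
    and E: "derivable False (fill G {#In (Conj \<phi> \<psi>)#})" and n: "is_nested (fill G {#})"
  have D\<phi>: "derivable False (fill (down G) {#Out \<phi>#})"
    and D\<psi>: "derivable False (fill (down G) {#Out \<psi>#})"
    using derivable_invert[OF D, of "{#Out \<phi>#}"] derivable_invert[OF D, of "{#Out \<psi>#}"] by simp_all
  have "derivable False (fill G {#In \<phi>, In \<psi>#})"
    using derivable_invert[OF E, of "{#In \<phi>, In \<psi>#}"] by simp
  then have "derivable False (fill (add_at_hole G {#In \<psi>#}) {#})"
    using derivable_weaken[OF D\<phi>, of "{#In \<psi>#}"] n
    by (intro cut_admissibleD[OF assms(1)]) (simp_all add: add_mset_commute)
  with D\<psi> n show "derivable False (fill G {#})"
    by (intro cut_admissibleD[OF assms(2)]) simp_all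
qed

text \<open>Permuting a cut above the last rule of one premiss, whose active part changes from \<open>Xr\<close> to
  \<open>Xp\<close>: the other premiss is adapted to \<open>Xp\<close> by weakening and inversion.\<close>

lemma cut_into_right_premise:
  assumes IH: "\<And>G. fill (plug_right C {#In \<xi>#}) Xp = fill G {#In \<xi>#} \<Longrightarrow>
      derivable False (fill (down G) {#Out \<xi>#}) \<Longrightarrow> is_nested (fill G {#}) \<Longrightarrow>
      derivable False (fill G {#})"
    and D: "derivable False (fill (down (plug_left C Xr)) {#Out \<xi>#})"
    and sim: "struct_sim (=) (strip Xr) (strip Xp)"
    and nested: "is_nested (fill2 C Xp {#})"
  shows "derivable False (fill2 C Xp {#})"
proof -
  have "struct_sim (=) (fill (down (plug_left C Xr)) {#Out \<xi>#})
      (fill (down (plug_left C Xp)) {#Out \<xi>#})"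
    using struct_sim_fill[OF _ sim, where K = "plug_right (down2 C) {#Out \<xi>#}"] by simp
  with D have "derivable False (fill (down (plug_left C Xp)) {#Out \<xi>#})"
    by (rule derivable_struct_sim_eq)
  with nested IH[of "plug_left C Xp"] show ?thesis by simp
qed

lemma cut_into_left_premise:
  assumes IH: "\<And>G. fill (plug_right C {#Out \<xi>#}) (strip Xp) = fill (down G) {#Out \<xi>#} \<Longrightarrow>
      derivable False (fill G {#In \<xi>#}) \<Longrightarrow> is_nested (fill G {#}) \<Longrightarrow>
      derivable False (fill G {#})"
    and C: "down2 C' = C"
    and E: "derivable False (fill (plug_left C' Xr) {#In \<xi>#})"
    and sim: "struct_sim (=) Xr Xp"
    and nested: "is_nested (fill2 C' Xp {#})"
  shows "derivable False (fill2 C' Xp {#})"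
proof -
  have "struct_sim (=) (fill (plug_left C' Xr) {#In \<xi>#}) (fill (plug_left C' Xp) {#In \<xi>#})"
    using struct_sim_fill[OF _ sim, where K = "plug_right C' {#In \<xi>#}"] by simp
  with E have "derivable False (fill (plug_left C' Xp) {#In \<xi>#})"
    by (rule derivable_struct_sim_eq)
  with nested C IH[of "plug_left C' Xp"] show ?thesis by simp
qed

lemma cut_principal_Imp:
  assumes "cut_admissible \<alpha>" "cut_admissible \<beta>"
    and D: "derivable False (fill (down H) {#Out (Imp \<alpha> \<beta>)#})"
    and D\<alpha>: "derivable False (fill (down H) {#Out \<alpha>#})"
    and E\<beta>: "derivable False (fill H {#In \<beta>#})"
    and nested: "is_nested (fill H {#})"
  shows "derivable False (fill H {#})"
proof -
  have "derivable False (fill (down H) {#In \<alpha>, Out \<beta>#})"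
    using derivable_invert[OF D, of "{#In \<alpha>, Out \<beta>#}"] by simp
  then have "derivable False (fill (add_at_hole (down H) {#Out \<beta>#}) {#})"
    using D\<alpha> by (intro cut_admissibleD[OF assms(1)]) (simp_all add: add_mset_commute)
  with E\<beta> nested show ?thesis
    by (intro cut_admissibleD[OF assms(2)]) simp_all
qed

lemma cut_principal_BoxArr:
  assumes "cut_admissible \<alpha>" "cut_admissible \<beta>" "interderivable \<alpha> \<eta>"
    and D: "derivable False (fill (down H) {#Out (BoxArr \<alpha> \<beta>), Comp \<eta> (strip \<Delta>)#})"
    and E: "derivable False (fill H {#Comp \<eta> ({#In \<beta>#} + \<Delta>)#})"
    and nested: "is_nested (fill H {#Comp \<eta> \<Delta>#})"
  shows "derivable False (fill H {#Comp \<eta> \<Delta>#})"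
proof -
  have "derivable False (fill (down H) {#Comp \<alpha> {#Out \<beta>#}, Comp \<eta> (strip \<Delta>)#})"
    using derivable_invert[OF D, of "{#Comp \<alpha> {#Out \<beta>#}#}"] by (simp add: add_mset_commute)
  then have "derivable False (fill (down H) {#Comp \<eta> ({#Out \<beta>#} + strip \<Delta>)#})"
    by (rule derivable_merge_Comp[OF assms(1,3)])
  with E nested have "derivable False (fill (ctx_comp H (Nest {#} \<eta> (Top \<Delta>))) {#})"
    by (intro cut_admissibleD[OF assms(2)]) (simp_all add: ac_simps)
  then show ?thesis by simp
qed

lemma cut_principal_DiaArr:
  assumes "cut_admissible \<alpha>" "cut_admissible \<beta>" "interderivable \<alpha> \<eta>"
    and D: "derivable False (fill (down H) {#Comp \<eta> ({#Out \<beta>#} + strip \<Delta>)#})"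
    and E: "derivable False (fill H {#In (DiaArr \<alpha> \<beta>), Comp \<eta> \<Delta>#})"
    and nested: "is_nested (fill H {#Comp \<eta> \<Delta>#})"
  shows "derivable False (fill H {#Comp \<eta> \<Delta>#})"
proof -
  have "derivable False (fill H {#Comp \<alpha> {#In \<beta>#}, Comp \<eta> \<Delta>#})"
    using derivable_invert[OF E, of "{#Comp \<alpha> {#In \<beta>#}#}"] by (simp add: add_mset_commute)
  then have "derivable False (fill H {#Comp \<eta> ({#In \<beta>#} + \<Delta>)#})"
    by (rule derivable_merge_Comp[OF assms(1,3)])
  with D nested have "derivable False (fill (ctx_comp H (Nest {#} \<eta> (Top \<Delta>))) {#})"
    by (intro cut_admissibleD[OF assms(2)]) (simp_all add: ac_simps)
  then show ?thesis by simp
qed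

lemma cut_by_right_induction:
  assumes "cut_admissible \<alpha>" "cut_admissible \<beta>" and xi: "\<xi> = Imp \<alpha> \<beta> \<or> \<xi> = BoxArr \<alpha> \<beta>"
  shows "derivable False U \<Longrightarrow> U = fill G {#In \<xi>#} \<Longrightarrow>
    derivable False (fill (down G) {#Out \<xi>#}) \<Longrightarrow> is_nested (fill G {#}) \<Longrightarrow>
    derivable False (fill G {#})"
proof (induction arbitrary: G rule: derivable.induct)
  case (init H p G)
  obtain C where G: "G = plug_left C {#In (Atom p), Out (Atom p)#}"
    using init.prems(1) by (rule fill_eq_fill_single_flat) (use xi in auto)
  show ?case unfolding G fill_plug_left_empty
    by (rule derivable.init) (use init.prems(3) G in \<open>simp\<close>)
next
  case (botL H G)
  obtain C where G: "G = plug_left C {#In Bot#}"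
    using botL.prems(1) by (rule fill_eq_fill_single_flat) (use xi in auto)
  show ?case unfolding G fill_plug_left_empty
    by (rule derivable.botL) (use botL.prems(3) G in \<open>simp\<close>)
next
  case (conjL H \<phi> \<psi> G)
  obtain C where C: "H = plug_right C {#In \<xi>#}" "G = plug_left C {#In (Conj \<phi> \<psi>)#}"
    using conjL.prems(1) by (rule fill_eq_fill_single_flat) (use xi in auto)
  have "derivable False (fill2 C {#In \<phi>, In \<psi>#} {#})"
    by (rule cut_into_right_premise[OF conjL.IH[unfolded C(1)] conjL.prems(2)[unfolded C(2)]])
      (use conjL.prems(3) C(2) in \<open>simp_all add: struct_sim_piece piece_inverts\<close>)
  then show ?case unfolding C(2) fill_plug_left_empty
    by (intro derivable.conjL) (use conjL.prems(3) C(2) in \<open>simp_all\<close>)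
next
  case (conjR H \<phi> \<psi> G)
  obtain C where C: "H = plug_right C {#In \<xi>#}" "G = plug_left C {#Out (Conj \<phi> \<psi>)#}"
    using conjR.prems(1) by (rule fill_eq_fill_single_flat) auto
  have "derivable False (fill2 C {#Out \<phi>#} {#})"
    by (rule cut_into_right_premise[OF conjR.IH(1)[unfolded C(1)] conjR.prems(2)[unfolded C(2)]])
      (use conjR.prems(3) C(2) in \<open>simp_all add: struct_sim_weaken\<close>)
  moreover have "derivable False (fill2 C {#Out \<psi>#} {#})"
    by (rule cut_into_right_premise[OF conjR.IH(2)[unfolded C(1)] conjR.prems(2)[unfolded C(2)]])
      (use conjR.prems(3) C(2) in \<open>simp_all add: struct_sim_weaken\<close>)
  ultimately show ?case unfolding C(2) fill_plug_left_empty
    by (intro derivable.conjR) (use conjR.prems(3) C(2) in \<open>simp_all\<close>)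
next
  case (disjL H \<phi> \<psi> G)
  obtain C where C: "H = plug_right C {#In \<xi>#}" "G = plug_left C {#In (Disj \<phi> \<psi>)#}"
    using disjL.prems(1) by (rule fill_eq_fill_single_flat) (use xi in auto)
  have "derivable False (fill2 C {#In \<phi>#} {#})"
    by (rule cut_into_right_premise[OF disjL.IH(1)[unfolded C(1)] disjL.prems(2)[unfolded C(2)]])
      (use disjL.prems(3) C(2) in \<open>simp_all add: struct_sim_piece piece_inverts\<close>)
  moreover have "derivable False (fill2 C {#In \<psi>#} {#})"
    by (rule cut_into_right_premise[OF disjL.IH(2)[unfolded C(1)] disjL.prems(2)[unfolded C(2)]])
      (use disjL.prems(3) C(2) in \<open>simp_all add: struct_sim_piece piece_inverts\<close>)
  ultimately show ?case unfolding C(2) fill_plug_left_empty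
    by (intro derivable.disjL) (use disjL.prems(3) C(2) in \<open>simp_all\<close>)
next
  case (disjR1 H \<phi> \<psi> G)
  obtain C where C: "H = plug_right C {#In \<xi>#}" "G = plug_left C {#Out (Disj \<phi> \<psi>)#}"
    using disjR1.prems(1) by (rule fill_eq_fill_single_flat) auto
  have "derivable False (fill2 C {#Out \<phi>#} {#})"
    by (rule cut_into_right_premise[OF disjR1.IH[unfolded C(1)] disjR1.prems(2)[unfolded C(2)]])
      (use disjR1.prems(3) C(2) in \<open>simp_all add: struct_sim_weaken\<close>)
  then show ?case unfolding C(2) fill_plug_left_empty
    by (intro derivable.disjR1) (use disjR1.prems(3) C(2) in \<open>simp_all\<close>)
next
  case (disjR2 H \<psi> \<phi> G)
  obtain C where C: "H = plug_right C {#In \<xi>#}" "G = plug_left C {#Out (Disj \<phi> \<psi>)#}"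
    using disjR2.prems(1) by (rule fill_eq_fill_single_flat) auto
  have "derivable False (fill2 C {#Out \<psi>#} {#})"
    by (rule cut_into_right_premise[OF disjR2.IH[unfolded C(1)] disjR2.prems(2)[unfolded C(2)]])
      (use disjR2.prems(3) C(2) in \<open>simp_all add: struct_sim_weaken\<close>)
  then show ?case unfolding C(2) fill_plug_left_empty
    by (intro derivable.disjR2) (use disjR2.prems(3) C(2) in \<open>simp_all\<close>)
next
  case (impR H \<phi> \<psi> G)
  obtain C where C: "H = plug_right C {#In \<xi>#}" "G = plug_left C {#Out (Imp \<phi> \<psi>)#}"
    using impR.prems(1) by (rule fill_eq_fill_single_flat) auto
  have "derivable False (fill2 C {#In \<phi>, Out \<psi>#} {#})"
    by (rule cut_into_right_premise[OF impR.IH[unfolded C(1)] impR.prems(2)[unfolded C(2)]])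
      (use impR.prems(3) C(2) in \<open>simp_all add: struct_sim_weaken\<close>)
  then show ?case unfolding C(2) fill_plug_left_empty
    by (intro derivable.impR) (use impR.prems(3) C(2) in \<open>simp_all\<close>)
next
  case (boxR H \<phi> \<psi> G)
  obtain C where C: "H = plug_right C {#In \<xi>#}" "G = plug_left C {#Out (BoxArr \<phi> \<psi>)#}"
    using boxR.prems(1) by (rule fill_eq_fill_single_flat) auto
  have "derivable False (fill2 C {#Comp \<phi> {#Out \<psi>#}#} {#})"
    by (rule cut_into_right_premise[OF boxR.IH[unfolded C(1)] boxR.prems(2)[unfolded C(2)]])
      (use boxR.prems(3) C(2) in \<open>simp_all add: struct_sim_weaken\<close>)
  then show ?case unfolding C(2) fill_plug_left_empty
    by (intro derivable.boxR) (use boxR.prems(3) C(2) in \<open>simp_all\<close>)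
next
  case (diaL H \<phi> \<psi> G)
  obtain C where C: "H = plug_right C {#In \<xi>#}" "G = plug_left C {#In (DiaArr \<phi> \<psi>)#}"
    using diaL.prems(1) by (rule fill_eq_fill_single_flat) (use xi in auto)
  have "derivable False (fill2 C {#Comp \<phi> {#In \<psi>#}#} {#})"
    by (rule cut_into_right_premise[OF diaL.IH[unfolded C(1)] diaL.prems(2)[unfolded C(2)]])
      (use diaL.prems(3) C(2) in \<open>simp_all add: struct_sim_piece piece_inverts\<close>)
  then show ?case unfolding C(2) fill_plug_left_empty
    by (intro derivable.diaL) (use diaL.prems(3) C(2) in \<open>simp_all\<close>)
next
  case (impL H \<phi> \<psi> G)
  from fill_eq_fill_single_cases[OF impL.prems(1)]
  consider (principal) "\<xi> = Imp \<phi> \<psi>" "G = H"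
    | (permute) C where "H = plug_right C {#In \<xi>#}" "G = plug_left C {#In (Imp \<phi> \<psi>)#}"
    by (auto simp: add_eq_conv_ex)
  then show ?case
  proof cases
    case principal
    with xi have "\<phi> = \<alpha>" "\<psi> = \<beta>" by auto
    have "derivable False (fill (add_at_hole (down H) {#Out \<phi>#}) {#})"
      by (rule impL.IH(1)) (use impL.prems(2) principal in \<open>simp_all add: add_mset_commute\<close>)
    with impL.hyps(2) impL.prems(2,3) principal \<open>\<phi> = \<alpha>\<close> \<open>\<psi> = \<beta>\<close> show ?thesis
      by (intro cut_principal_Imp[OF assms(1,2)]) simp_all
  next
    case permute
    have "derivable False (fill2 C {#In \<psi>#} {#})"
      by (rule cut_into_right_premise
          [OF impL.IH(2)[unfolded permute(1)] impL.prems(2)[unfolded permute(2)]])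
        (use impL.prems(3) permute(2) in \<open>simp_all add: struct_sim_piece piece_inverts\<close>)
    moreover have "derivable False (fill (plug_left (down2 C) {#In (Imp \<phi> \<psi>), Out \<phi>#}) {#})"
      by (rule impL.IH(1)) (use impL.prems(2) permute in \<open>simp_all\<close>)
    ultimately show ?thesis unfolding permute(2) fill_plug_left_empty
      by (intro derivable.impL) (use impL.prems(3) permute(2) in \<open>simp_all\<close>)
  qed
next
  case (boxL \<phi> \<eta> H \<psi> \<Delta> G)
  have "interderivable \<phi> \<eta>"
    using boxL.hyps(1,2) by (simp add: interderivable_def)
  from fill_eq_fill_single_cases[OF boxL.prems(1)]
  consider (principal) "\<xi> = BoxArr \<phi> \<psi>" "G = add_at_hole H {#Comp \<eta> \<Delta>#}"
    | (permute) C where "H = plug_right C {#In \<xi>#}" "G = plug_left C {#In (BoxArr \<phi> \<psi>), Comp \<eta> \<Delta>#}"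
    | (inside) C where "\<Delta> = fill C {#In \<xi>#}"
        "G = ctx_comp (add_at_hole H {#In (BoxArr \<phi> \<psi>)#}) (Nest {#} \<eta> C)"
    by (auto simp: add_eq_conv_ex)
  then show ?case
  proof cases
    case principal
    with xi have "\<phi> = \<alpha>" "\<psi> = \<beta>" by auto
    have D: "derivable False (fill (down H) (add_mset (Comp \<eta> (strip \<Delta>)) {#Out (BoxArr \<phi> \<psi>)#}))"
      using boxL.prems(2) principal by (simp add: add_mset_commute)
    have "derivable False (fill (add_at_hole H {#Comp \<eta> ({#In \<psi>#} + \<Delta>)#}) {#})"
      by (rule boxL.IH(3))
        (use principal boxL.prems(3) derivable_weaken_Comp[OF D, of "{#In \<psi>#}"] in
          \<open>simp_all add: add_mset_commute\<close>)
    with D boxL.prems(3) principal \<open>\<phi> = \<alpha>\<close> \<open>\<psi> = \<beta>\<close> \<open>interderivable \<phi> \<eta>\<close> show ?thesis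
      using cut_principal_BoxArr[OF assms(1,2)] by (simp add: add_mset_commute)
  next
    case permute
    have "struct_sim (=) (strip {#In (BoxArr \<phi> \<psi>), Comp \<eta> \<Delta>#})
        (strip {#In (BoxArr \<phi> \<psi>), Comp \<eta> ({#In \<psi>#} + \<Delta>)#})"
      using struct_sim_weaken_Comp[of "{#In \<psi>#}" \<eta> "strip \<Delta>" "{#In (BoxArr \<phi> \<psi>)#}"]
      by (simp add: add_mset_commute)
    with boxL.IH(3)[unfolded permute(1)] boxL.prems(2)[unfolded permute(2)]
    have "derivable False (fill2 C {#In (BoxArr \<phi> \<psi>), Comp \<eta> ({#In \<psi>#} + \<Delta>)#} {#})"
      by (rule cut_into_right_premise) (use boxL.prems(3) permute(2) in \<open>simp_all\<close>)
    then show ?thesis unfolding permute(2) fill_plug_left_empty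
      by - (rule derivable.boxL[OF boxL.hyps(1,2)], use boxL.prems(3) permute(2) in simp_all)
  next
    case inside
    let ?G = "ctx_comp (add_at_hole H {#In (BoxArr \<phi> \<psi>)#}) (Nest {#} \<eta> (add_outer C {#In \<psi>#}))"
    have "derivable False (fill ?G {#})"
    proof (rule boxL.IH(3))
      show "fill H {#In (BoxArr \<phi> \<psi>), Comp \<eta> ({#In \<psi>#} + \<Delta>)#} = fill ?G {#In \<xi>#}"
        using inside by (simp add: add_mset_commute)
      have "derivable False (fill (down H)
          (add_mset (Comp \<eta> (fill (down C) {#Out \<xi>#})) {#In (BoxArr \<phi> \<psi>)#}))"
        using boxL.prems(2) inside by (simp add: ac_simps)
      from derivable_weaken_Comp[OF this, of "{#In \<psi>#}"]
      show "derivable False (fill (down ?G) {#Out \<xi>#})" by (simp add: ac_simps)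
      show "is_nested (fill ?G {#})" using boxL.prems(3) inside by simp
    qed
    moreover have "fill G {#} = fill H {#In (BoxArr \<phi> \<psi>), Comp \<eta> (fill C {#})#}"
      using inside by (simp add: add_mset_commute)
    ultimately show ?thesis
      using derivable.boxL[OF boxL.hyps(1,2), of H \<psi> "fill C {#}"] boxL.prems(3)
      by (simp add: add_mset_commute)
  qed
next
  case (diaR \<phi> \<eta> H \<psi> \<Delta> G)
  from fill_eq_fill_single_cases[OF diaR.prems(1)]
  consider (permute) C where
      "H = plug_right C {#In \<xi>#}" "G = plug_left C {#Out (DiaArr \<phi> \<psi>), Comp \<eta> \<Delta>#}"
    | (inside) C where "\<Delta> = fill C {#In \<xi>#}"
        "G = ctx_comp (add_at_hole H {#Out (DiaArr \<phi> \<psi>)#}) (Nest {#} \<eta> C)"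
    by (auto simp: add_eq_conv_ex)
  then show ?case
  proof cases
    case permute
    have "derivable False (fill2 C {#Comp \<eta> ({#Out \<psi>#} + \<Delta>)#} {#})"
      by (rule cut_into_right_premise
          [OF diaR.IH(3)[unfolded permute(1)] diaR.prems(2)[unfolded permute(2)]])
        (use diaR.prems(3) permute(2) in \<open>simp_all add: struct_sim_refl\<close>)
    then show ?thesis unfolding permute(2) fill_plug_left_empty
      by - (rule derivable.diaR[OF diaR.hyps(1,2)], use diaR.prems(3) permute(2) in simp_all)
  next
    case inside
    let ?G = "ctx_comp H (Nest {#} \<eta> (add_outer C {#Out \<psi>#}))"
    have "derivable False (fill ?G {#})"
      by (rule diaR.IH(3)) (use inside diaR.prems(2,3) in \<open>simp_all add: ac_simps\<close>)
    then show ?thesis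
      using derivable.diaR[OF diaR.hyps(1,2), of H \<psi> "fill C {#}"] diaR.prems(3) inside
      by (simp add: ac_simps add_mset_commute)
  qed
next
  case (cut H \<zeta> G)
  then show ?case by simp
qed

lemma cut_by_left_induction:
  assumes xi: "(\<exists>p. \<xi> = Atom p) \<or> \<xi> = Bot \<or>
    (\<exists>\<alpha> \<beta>. (\<xi> = Disj \<alpha> \<beta> \<or> \<xi> = DiaArr \<alpha> \<beta>) \<and> cut_admissible \<alpha> \<and> cut_admissible \<beta>)"
  shows "derivable False S \<Longrightarrow> S = fill (down G) {#Out \<xi>#} \<Longrightarrow>
    derivable False (fill G {#In \<xi>#}) \<Longrightarrow> is_nested (fill G {#}) \<Longrightarrow>
    derivable False (fill G {#})"
proof (induction arbitrary: G rule: derivable.induct)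
  case (init H p G)
  from fill_eq_fill_single_cases[OF init.prems(1)]
  consider (principal) K A where "\<xi> = Atom p" "down G = add_at_hole K (add_mset (In (Atom p)) A)"
    | (permute) C where "down G = plug_left C {#In (Atom p), Out (Atom p)#}"
    by (auto simp: add_eq_conv_ex)
  then show ?case
  proof cases
    case principal
    have "hole_level (down G) = hole_level (add_at_hole K (add_mset (In (Atom p)) A))"
      using principal(2) by simp
    then have "In (Atom p) \<in># strip (hole_level G)"
      by simp
    then obtain G0 where G0: "G = add_at_hole G0 {#In (Atom p)#}"
      using hole_level_mem strip_mem_In by blast
    with init.prems(2) principal show ?thesis
      using derivable_contract_Atom[of G0 p] by (simp add: add_mset_commute)
  qed (use down_eq_plug_left_outs in fastforce)
next
  case (botL H G)
  obtain C where "down G = plug_left C {#In Bot#}"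
    using botL.prems(1) by (rule fill_eq_fill_single_flat) auto
  then obtain C' where C': "G = plug_left C' {#In Bot#}"
    by (rule down_eq_plug_left_In)
  show ?case unfolding C' fill_plug_left_empty
    by (rule derivable.botL) (use botL.prems(3) C' in simp)
next
  case (conjL H \<phi> \<psi> G)
  obtain C where C: "H = plug_right C {#Out \<xi>#}" "down G = plug_left C {#In (Conj \<phi> \<psi>)#}"
    using conjL.prems(1) by (rule fill_eq_fill_single_flat) auto
  then obtain C' where C': "G = plug_left C' {#In (Conj \<phi> \<psi>)#}" "down2 C' = C"
    by (elim down_eq_plug_left_In)
  have "derivable False (fill2 C' {#In \<phi>, In \<psi>#} {#})"
    by (rule cut_into_left_premise[OF conjL.IH[unfolded C(1)] C'(2) conjL.prems(2)[unfolded C'(1)]])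
      (use conjL.prems(3) C'(1) in \<open>simp_all add: struct_sim_piece piece_inverts\<close>)
  then show ?case unfolding C'(1) fill_plug_left_empty
    by (intro derivable.conjL) (use conjL.prems(3) C'(1) in simp_all)
next
  case (disjL H \<phi> \<psi> G)
  obtain C where C: "H = plug_right C {#Out \<xi>#}" "down G = plug_left C {#In (Disj \<phi> \<psi>)#}"
    using disjL.prems(1) by (rule fill_eq_fill_single_flat) auto
  then obtain C' where C': "G = plug_left C' {#In (Disj \<phi> \<psi>)#}" "down2 C' = C"
    by (elim down_eq_plug_left_In)
  have "derivable False (fill2 C' {#In \<phi>#} {#})"
    by (rule cut_into_left_premise
        [OF disjL.IH(1)[unfolded C(1)] C'(2) disjL.prems(2)[unfolded C'(1)]])
      (use disjL.prems(3) C'(1) in \<open>simp_all add: struct_sim_piece piece_inverts\<close>)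
  moreover have "derivable False (fill2 C' {#In \<psi>#} {#})"
    by (rule cut_into_left_premise
        [OF disjL.IH(2)[unfolded C(1)] C'(2) disjL.prems(2)[unfolded C'(1)]])
      (use disjL.prems(3) C'(1) in \<open>simp_all add: struct_sim_piece piece_inverts\<close>)
  ultimately show ?case unfolding C'(1) fill_plug_left_empty
    by (intro derivable.disjL) (use disjL.prems(3) C'(1) in simp_all)
next
  case (diaL H \<phi> \<psi> G)
  obtain C where C: "H = plug_right C {#Out \<xi>#}" "down G = plug_left C {#In (DiaArr \<phi> \<psi>)#}"
    using diaL.prems(1) by (rule fill_eq_fill_single_flat) auto
  then obtain C' where C': "G = plug_left C' {#In (DiaArr \<phi> \<psi>)#}" "down2 C' = C"
    by (elim down_eq_plug_left_In)
  have "derivable False (fill2 C' {#Comp \<phi> {#In \<psi>#}#} {#})"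
    by (rule cut_into_left_premise[OF diaL.IH[unfolded C(1)] C'(2) diaL.prems(2)[unfolded C'(1)]])
      (use diaL.prems(3) C'(1) in \<open>simp_all add: struct_sim_piece piece_inverts\<close>)
  then show ?case unfolding C'(1) fill_plug_left_empty
    by (intro derivable.diaL) (use diaL.prems(3) C'(1) in simp_all)
next
  case (impL H \<phi> \<psi> G)
  obtain C where C: "H = plug_right C {#Out \<xi>#}" "down G = plug_left C {#In (Imp \<phi> \<psi>)#}"
    using impL.prems(1) by (rule fill_eq_fill_single_flat) auto
  then obtain C' where C': "G = plug_left C' {#In (Imp \<phi> \<psi>)#}" "down2 C' = C"
    by (elim down_eq_plug_left_In)
  have "derivable False (fill2 C' {#In \<psi>#} {#})"
    by (rule cut_into_left_premise
        [OF impL.IH(2)[unfolded C(1)] C'(2) impL.prems(2)[unfolded C'(1)]])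
      (use impL.prems(3) C'(1) in \<open>simp_all add: struct_sim_piece piece_inverts\<close>)
  moreover have "derivable False (fill (down (plug_right C' {#})) {#In (Imp \<phi> \<psi>), Out \<phi>#})"
    using impL.hyps(1) C(1) C'(2)[symmetric] by simp
  ultimately show ?case unfolding C'(1) fill_plug_left_empty
    by (intro derivable.impL) (use impL.prems(3) C'(1) in simp_all)
next
  case (conjR H \<phi> \<psi> G)
  obtain C where "down G = plug_left C {#Out (Conj \<phi> \<psi>)#}"
    using conjR.prems(1) by (rule fill_eq_fill_single_flat) (use xi in auto)
  then show ?case by (auto dest: down_eq_plug_left_outs)
next
  case (impR H \<phi> \<psi> G)
  obtain C where "down G = plug_left C {#Out (Imp \<phi> \<psi>)#}"
    using impR.prems(1) by (rule fill_eq_fill_single_flat) (use xi in auto)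
  then show ?case by (auto dest: down_eq_plug_left_outs)
next
  case (boxR H \<phi> \<psi> G)
  obtain C where "down G = plug_left C {#Out (BoxArr \<phi> \<psi>)#}"
    using boxR.prems(1) by (rule fill_eq_fill_single_flat) (use xi in auto)
  then show ?case by (auto dest: down_eq_plug_left_outs)
next
  case (disjR1 H \<phi> \<psi> G)
  from fill_eq_fill_single_cases[OF disjR1.prems(1)]
  consider (principal) "\<xi> = Disj \<phi> \<psi>" "H = down G"
    | (permute) C where "down G = plug_left C {#Out (Disj \<phi> \<psi>)#}"
    by (auto simp: add_eq_conv_ex)
  then show ?case
  proof cases
    case principal
    with xi have "cut_admissible \<phi>" by auto
    moreover have "derivable False (fill G {#In \<phi>#})"
      using derivable_invert[OF disjR1.prems(2), of "{#In \<phi>#}"] principal by simp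
    ultimately show ?thesis
      using disjR1.hyps(1) disjR1.prems(3) principal by (blast intro: cut_admissibleD)
  qed (auto dest: down_eq_plug_left_outs)
next
  case (disjR2 H \<psi> \<phi> G)
  from fill_eq_fill_single_cases[OF disjR2.prems(1)]
  consider (principal) "\<xi> = Disj \<phi> \<psi>" "H = down G"
    | (permute) C where "down G = plug_left C {#Out (Disj \<phi> \<psi>)#}"
    by (auto simp: add_eq_conv_ex)
  then show ?case
  proof cases
    case principal
    with xi have "cut_admissible \<psi>" by auto
    moreover have "derivable False (fill G {#In \<psi>#})"
      using derivable_invert[OF disjR2.prems(2), of "{#In \<psi>#}"] principal by simp
    ultimately show ?thesis
      using disjR2.hyps(1) disjR2.prems(3) principal by (blast intro: cut_admissibleD)
  qed (auto dest: down_eq_plug_left_outs)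
next
  case (boxL \<phi> \<eta> H \<psi> \<Delta> G)
  from fill_eq_fill_single_cases[OF boxL.prems(1)]
  consider (permute) C where "H = plug_right C {#Out \<xi>#}"
      "down G = plug_left C {#In (BoxArr \<phi> \<psi>), Comp \<eta> \<Delta>#}"
    | (inside) C where "\<Delta> = fill C {#Out \<xi>#}"
      "down G = ctx_comp (add_at_hole H {#In (BoxArr \<phi> \<psi>)#}) (Nest {#} \<eta> C)"
    by (auto simp: add_eq_conv_ex)
  then show ?case
  proof cases
    case permute
    from down_eq_plug_left_lift[OF permute(2)] obtain C' X' where
      C': "G = plug_left C' X'" "down2 C' = C"
      and "strip X' = {#In (BoxArr \<phi> \<psi>), Comp \<eta> \<Delta>#}" "top_out_free X'"
      by blast
    then obtain \<Delta>' where X': "X' = {#In (BoxArr \<phi> \<psi>), Comp \<eta> \<Delta>'#}" "strip \<Delta>' = \<Delta>"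
      by (elim top_out_free_strip_In_Comp)
    have "struct_sim (=) X' {#In (BoxArr \<phi> \<psi>), Comp \<eta> ({#In \<psi>#} + \<Delta>')#}"
      using X'(1) struct_sim_weaken_Comp[of "{#In \<psi>#}" \<eta> \<Delta>' "{#In (BoxArr \<phi> \<psi>)#}"]
      by (simp add: add_mset_commute)
    with boxL.IH(3)[unfolded permute(1)] C'(2) boxL.prems(2)[unfolded C'(1)]
    have "derivable False (fill2 C' {#In (BoxArr \<phi> \<psi>), Comp \<eta> ({#In \<psi>#} + \<Delta>')#} {#})"
      by (rule cut_into_left_premise) (use boxL.prems(3) C'(1) X' in simp_all)
    then show ?thesis unfolding C'(1) X'(1) fill_plug_left_empty
      by - (rule derivable.boxL[OF boxL.hyps(1,2)], use boxL.prems(3) C'(1) X'(1) in simp_all)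
  next
    case inside
    from down_eq_deep_lift[OF inside(2)] obtain H' X0 C' where
      G: "G = ctx_comp (add_at_hole H' X0) (Nest {#} \<eta> C')" "down H' = H" "down C' = C"
      and "strip X0 = {#In (BoxArr \<phi> \<psi>)#}" "top_out_free X0"
      by blast
    then have X0: "X0 = {#In (BoxArr \<phi> \<psi>)#}"
      by (simp add: top_out_free_strip_In)
    let ?G = "ctx_comp (add_at_hole H' {#In (BoxArr \<phi> \<psi>)#}) (Nest {#} \<eta> (add_outer C' {#In \<psi>#}))"
    have "derivable False (fill ?G {#})"
    proof (rule boxL.IH(3))
      show "fill H {#In (BoxArr \<phi> \<psi>), Comp \<eta> ({#In \<psi>#} + \<Delta>)#} = fill (down ?G) {#Out \<xi>#}"
        using inside(1) G(2,3) by (simp add: add_mset_commute)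
      have "derivable False (fill H'
          (add_mset (Comp \<eta> (fill C' {#In \<xi>#})) {#In (BoxArr \<phi> \<psi>)#}))"
        using boxL.prems(2) G(1) X0 by (simp add: ac_simps)
      from derivable_weaken_Comp[OF this, of "{#In \<psi>#}"]
      show "derivable False (fill ?G {#In \<xi>#})" by (simp add: ac_simps)
      show "is_nested (fill ?G {#})" using boxL.prems(3) G(1) X0 by simp
    qed
    moreover have "fill G {#} = fill H' {#In (BoxArr \<phi> \<psi>), Comp \<eta> (fill C' {#})#}"
      using G(1) X0 by (simp add: add_mset_commute)
    ultimately show ?thesis
      using derivable.boxL[OF boxL.hyps(1,2), of H' \<psi> "fill C' {#}"] boxL.prems(3)
      by (simp add: add_mset_commute)
  qed
next
  case (diaR \<phi> \<eta> H \<psi> \<Delta> G)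
  from fill_eq_fill_single_cases[OF diaR.prems(1)]
  consider (principal) K A where "\<xi> = DiaArr \<phi> \<psi>" "H = add_at_hole K A"
      "down G = add_at_hole K (add_mset (Comp \<eta> \<Delta>) A)"
    | (permute) C where "down G = plug_left C {#Out (DiaArr \<phi> \<psi>), Comp \<eta> \<Delta>#}"
    | (inside) C where "down G = ctx_comp (add_at_hole H {#Out (DiaArr \<phi> \<psi>)#}) (Nest {#} \<eta> C)"
    by (auto simp: add_eq_conv_ex)
  then show ?case
  proof cases
    case principal
    with xi have cut: "cut_admissible \<phi>" "cut_admissible \<psi>" by auto
    have "hole_level (down G) = hole_level (add_at_hole K (add_mset (Comp \<eta> \<Delta>) A))"
      using principal(3) by simp
    then have "Comp \<eta> \<Delta> \<in># strip (hole_level G)" by simp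
    then obtain \<Delta>' where "Comp \<eta> \<Delta>' \<in># hole_level G" and \<Delta>': "strip \<Delta>' = \<Delta>"
      by (blast dest: strip_mem_Comp)
    then obtain G0 where G0: "G = add_at_hole G0 {#Comp \<eta> \<Delta>'#}"
      by (blast dest: hole_level_mem)
    have "down G0 = H"
      using principal(2,3) G0 \<Delta>' add_at_hole_cancel[of "down G0" "Comp \<eta> \<Delta>" "{#}" K A] by simp
    have "interderivable \<phi> \<eta>"
      using diaR.hyps(1,2) by (simp add: interderivable_def)
    with diaR.hyps(3) diaR.prems(2,3) principal(1) G0 \<Delta>' \<open>down G0 = H\<close> show ?thesis
      using cut_principal_DiaArr[OF cut, of \<eta> G0 \<Delta>'] by (simp add: add_mset_commute)
  next
    case inside
    then have "ctx_outs (down G) =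
        ctx_outs (ctx_comp (add_at_hole H {#Out (DiaArr \<phi> \<psi>)#}) (Nest {#} \<eta> C))"
      by simp
    then show ?thesis by simp
  qed (auto dest: down_eq_plug_left_outs)
next
  case (cut H \<zeta> G)
  then show ?case by simp
qed

lemma cut_admissible_Imp_BoxArr:
  assumes "cut_admissible \<alpha>" "cut_admissible \<beta>" "\<xi> = Imp \<alpha> \<beta> \<or> \<xi> = BoxArr \<alpha> \<beta>"
  shows "cut_admissible \<xi>"
  unfolding cut_admissible_def
proof (intro allI impI)
  fix G
  assume "derivable False (fill (down G) {#Out \<xi>#})" "derivable False (fill G {#In \<xi>#})"
    "is_nested (fill G {#})"
  then show "derivable False (fill G {#})"
    by (intro cut_by_right_induction[OF assms, of "fill G {#In \<xi>#}"]) simp_all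
qed

lemma cut_admissible_left_invertible:
  assumes "(\<exists>p. \<xi> = Atom p) \<or> \<xi> = Bot \<or>
    (\<exists>\<alpha> \<beta>. (\<xi> = Disj \<alpha> \<beta> \<or> \<xi> = DiaArr \<alpha> \<beta>) \<and> cut_admissible \<alpha> \<and> cut_admissible \<beta>)"
  shows "cut_admissible \<xi>"
  unfolding cut_admissible_def
proof (intro allI impI)
  fix G
  assume "derivable False (fill (down G) {#Out \<xi>#})" "derivable False (fill G {#In \<xi>#})"
    "is_nested (fill G {#})"
  then show "derivable False (fill G {#})"
    by (intro cut_by_left_induction[OF assms, of "fill (down G) {#Out \<xi>#}"]) simp_all
qed

lemma cut_admissible_all: "cut_admissible \<xi>"
proof (induction \<xi>)
  case (Conj \<alpha> \<beta>)
  then show ?case by (rule cut_admissible_Conj)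
next
  case (Imp \<alpha> \<beta>)
  show ?case by (rule cut_admissible_Imp_BoxArr[OF Imp.IH]) simp
next
  case (BoxArr \<alpha> \<beta>)
  show ?case by (rule cut_admissible_Imp_BoxArr[OF BoxArr.IH]) simp
qed (rule cut_admissible_left_invertible, blast)+

theorem theorem2:
  fixes \<Gamma> :: "'a seq"
  assumes "derivable True \<Gamma>"
  shows "derivable False \<Gamma>"
  using assms
proof (induction rule: derivable.induct)
  case (cut G \<xi>)
  then show ?case using cut_admissibleD[OF cut_admissible_all] by blast
qed (rule derivable.intros; assumption)+

end
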